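(* Let $d\ge 2$ and consider a translation-invariant, nearest-neighbor, frustration free quantum spin chain on $\mathbb{Z}$ with single-site spaces $\mathcal{H}_x=\mathbb{C}^d$, a fixed positive two-site interaction $h(x,x+1)\ge 0$, and local Hamiltonians $H(c,d)=\sum_{x=c}^{d-1}h(x,x+1)$ (notation as in the context). Suppose that $\varepsilon_{m,n}<1/2$ for some integers $n\ge m\ge 1$. Let $N\ge 2$ and $\psi\in\mathcal{G}(1,N)^\perp\subset \mathcal{H}_{[1,N]}$, and define $$\psi_1=(1-G(1,N-n))\psi,\qquad \psi_2=G(1,N-n)\psi,$$ so that $\psi=\psi_1+\psi_2$ (if $N\le n+1$, then $\psi_1=0$ and $\psi_2=\psi$). Then $$\langle\psi, H(1,N)\psi\rangle\ \ge\ \gamma_{m+n}\big(\alpha(\varepsilon_{m,n})\|\psi_1\|^2+\beta(\varepsilon_{m,n})\|\psi_2\|^2\big),$$ where $\alpha(\varepsilon)=(\sqrt{1-\varepsilon}-\sqrt{\varepsilon})^2$ and $\beta(\varepsilon)=\sqrt{1-\varepsilon}\,(\sqrt{1-\varepsilon}-\sqrt{\varepsilon})$.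
   Context: Setting: for each $x\in\mathbb{Z}$, $\mathcal{H}_x=\mathbb{C}^d$, and for a finite $\Lambda\subset\mathbb{Z}$, $\mathcal{H}_\Lambda=\bigotimes_{x\in\Lambda}\mathcal{H}_x$. A fixed positive operator $h$ on $\mathbb{C}^d\otimes\mathbb{C}^d$ gives $h(x,x+1)$ acting on sites $x,x+1$. For integers $c\le d$, $H(c,d)=\sum_{x=c}^{d-1}h(x,x+1)$, viewed as an operator on $\mathcal{H}_\Lambda$ for any interval $\Lambda\supset[c,d]$ (tensored with the identity elsewhere); $H(c,c)=0$. Frustration free means $\mathcal{G}(c,d):=\operatorname{Ker}H(c,d)\ne\{0\}$ for every interval $[c,d]$. $G(c,d)$ denotes the orthogonal projection onto $\mathcal{G}(c,d)$ (so $G(c,c)=1$; and by convention $G(1,k)=1$ for $k\le 1$). For $c<d$, the spectral gap $\gamma(c,d)$ is the largest number with $H(c,d)\ge\gamma(c,d)(1-G(c,d))$; it depends only on $d-c+1$. Set $\gamma_N=\min_{2\le k\le N}\gamma(1,k)$. For $m,n\ge 1$, on any $\mathcal{H}_{[a,b]}$ with $a\le -m$, $b\ge n$, define $$\varepsilon(m,n)=\sup\{\langle\psi,G(0,n)\psi\rangle:\ \psi\in\mathcal{G}(-m,0),\ \psi\in\mathcal{G}(-m,n)^\perp,\ \|\psi\|=1\},$$ (independent of $a,b$ and translation invariant), and $\varepsilon_{m,n}=\sup_{m'\ge m}\varepsilon(m',n)$. *)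

theory Defs
  imports Complex_Main
begin

text \<open>Spin chain with single-site space C^D (D = the paper's d).
  A basis vector of H_[a,b] is a configuration sigma :: int => nat with sigma x < D
  for x in [a,b] and sigma x = 0 outside [a,b]. Vectors of H_[a,b] are complex
  functions on configurations vanishing outside this finite set.\<close>

type_synonym cfg = "int \<Rightarrow> nat"
type_synonym vec = "cfg \<Rightarrow> complex"

definition cfgs :: "nat \<Rightarrow> int \<Rightarrow> int \<Rightarrow> cfg set" where
  "cfgs D a b = {\<sigma>. (\<forall>x. a \<le> x \<and> x \<le> b \<longrightarrow> \<sigma> x < D) \<and> (\<forall>x. \<not> (a \<le> x \<and> x \<le> b) \<longrightarrow> \<sigma> x = 0)}"

definition vecs :: "nat \<Rightarrow> int \<Rightarrow> int \<Rightarrow> vec set" where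
  "vecs D a b = {f. \<forall>\<sigma>. \<sigma> \<notin> cfgs D a b \<longrightarrow> f \<sigma> = 0}"

definition inner_sp :: "nat \<Rightarrow> int \<Rightarrow> int \<Rightarrow> vec \<Rightarrow> vec \<Rightarrow> complex" where
  "inner_sp D a b f g = (\<Sum>\<sigma>\<in>cfgs D a b. cnj (f \<sigma>) * g \<sigma>)"

definition norm_sp :: "nat \<Rightarrow> int \<Rightarrow> int \<Rightarrow> vec \<Rightarrow> real" where
  "norm_sp D a b f = sqrt (Re (inner_sp D a b f f))"

text \<open>The two-site interaction h on C^D (x) C^D is given by its matrix
  hm i j k l = < e_i (x) e_j , h (e_k (x) e_l) >, for i,j,k,l < D.
  h is a positive operator: <v, h v> is real and nonnegative for every v.\<close>

definition positive_int :: "nat \<Rightarrow> (nat \<Rightarrow> nat \<Rightarrow> nat \<Rightarrow> nat \<Rightarrow> complex) \<Rightarrow> bool" where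
  "positive_int D hm = (\<forall>v :: nat \<Rightarrow> nat \<Rightarrow> complex.
     let q = (\<Sum>i<D. \<Sum>j<D. \<Sum>k<D. \<Sum>l<D. cnj (v i j) * hm i j k l * v k l)
     in Im q = 0 \<and> Re q \<ge> 0)"

definition bond :: "nat \<Rightarrow> (nat \<Rightarrow> nat \<Rightarrow> nat \<Rightarrow> nat \<Rightarrow> complex) \<Rightarrow> int \<Rightarrow> int \<Rightarrow> int \<Rightarrow> vec \<Rightarrow> vec" where
  "bond D hm a b x f = (\<lambda>\<sigma>. if \<sigma> \<in> cfgs D a b then
      (\<Sum>k<D. \<Sum>l<D. hm (\<sigma> x) (\<sigma> (x+1)) k l * f (\<sigma>(x := k, x+1 := l))) else 0)"

definition Ham :: "nat \<Rightarrow> (nat \<Rightarrow> nat \<Rightarrow> nat \<Rightarrow> nat \<Rightarrow> complex) \<Rightarrow> int \<Rightarrow> int \<Rightarrow> int \<Rightarrow> int \<Rightarrow> vec \<Rightarrow> vec" where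
  "Ham D hm a b c e f = (\<lambda>\<sigma>. \<Sum>x\<in>{c..<e}. bond D hm a b x f \<sigma>)"

definition gs :: "nat \<Rightarrow> (nat \<Rightarrow> nat \<Rightarrow> nat \<Rightarrow> nat \<Rightarrow> complex) \<Rightarrow> int \<Rightarrow> int \<Rightarrow> int \<Rightarrow> int \<Rightarrow> vec set" where
  "gs D hm a b c e = {f \<in> vecs D a b. Ham D hm a b c e f = (\<lambda>_. 0)}"

definition proj :: "nat \<Rightarrow> int \<Rightarrow> int \<Rightarrow> vec set \<Rightarrow> vec \<Rightarrow> vec" where
  "proj D a b S f = (THE g. g \<in> S \<and> (\<forall>u\<in>S. inner_sp D a b u (\<lambda>\<sigma>. f \<sigma> - g \<sigma>) = 0))"

text \<open>G(c,e) as projection on H_[a,b].  For e <= c, H(c,e) = 0 so G(c,e) = 1,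
  matching the conventions G(c,c) = 1 and G(1,k) = 1 for k <= 1.\<close>
definition Gp :: "nat \<Rightarrow> (nat \<Rightarrow> nat \<Rightarrow> nat \<Rightarrow> nat \<Rightarrow> complex) \<Rightarrow> int \<Rightarrow> int \<Rightarrow> int \<Rightarrow> int \<Rightarrow> vec \<Rightarrow> vec" where
  "Gp D hm a b c e = proj D a b (gs D hm a b c e)"

definition frustration_free :: "nat \<Rightarrow> (nat \<Rightarrow> nat \<Rightarrow> nat \<Rightarrow> nat \<Rightarrow> complex) \<Rightarrow> bool" where
  "frustration_free D hm = (\<forall>c e. c \<le> e \<longrightarrow> gs D hm c e c e \<noteq> {\<lambda>_. 0})"

definition gap :: "nat \<Rightarrow> (nat \<Rightarrow> nat \<Rightarrow> nat \<Rightarrow> nat \<Rightarrow> complex) \<Rightarrow> int \<Rightarrow> int \<Rightarrow> real" where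
  "gap D hm c e = Sup {g. \<forall>f\<in>vecs D c e.
      g * Re (inner_sp D c e f (\<lambda>\<sigma>. f \<sigma> - Gp D hm c e c e f \<sigma>))
        \<le> Re (inner_sp D c e f (Ham D hm c e c e f))}"

definition gapN :: "nat \<Rightarrow> (nat \<Rightarrow> nat \<Rightarrow> nat \<Rightarrow> nat \<Rightarrow> complex) \<Rightarrow> int \<Rightarrow> real" where
  "gapN D hm N = Min ((\<lambda>k. gap D hm 1 k) ` {2..N})"

text \<open>epsilon(m,n), computed on H_[-m,n] (sup of the empty set taken as 0).\<close>
definition eps :: "nat \<Rightarrow> (nat \<Rightarrow> nat \<Rightarrow> nat \<Rightarrow> nat \<Rightarrow> complex) \<Rightarrow> int \<Rightarrow> int \<Rightarrow> real" where
  "eps D hm m n = Sup (insert 0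
     {Re (inner_sp D (-m) n \<psi> (Gp D hm (-m) n 0 n \<psi>)) | \<psi>.
        \<psi> \<in> gs D hm (-m) n (-m) 0 \<and>
        (\<forall>u\<in>gs D hm (-m) n (-m) n. inner_sp D (-m) n u \<psi> = 0) \<and>
        norm_sp D (-m) n \<psi> = 1})"

definition eps_mn :: "nat \<Rightarrow> (nat \<Rightarrow> nat \<Rightarrow> nat \<Rightarrow> nat \<Rightarrow> complex) \<Rightarrow> int \<Rightarrow> int \<Rightarrow> real" where
  "eps_mn D hm m n = Sup {eps D hm m' n | m'. m' \<ge> m}"

definition alpha :: "real \<Rightarrow> real" where
  "alpha e = (sqrt (1 - e) - sqrt e)^2"

definition beta :: "real \<Rightarrow> real" where
  "beta e = sqrt (1 - e) * (sqrt (1 - e) - sqrt e)"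

end

theory Submission
  imports Defs "HOL-Library.Function_Algebras" "HOL-Library.FuncSet" "HOL-Analysis.L2_Norm"
begin

text \<open>Induction on the chain length \<open>N\<close>. Write \<open>\<psi> = \<psi>\<^sub>1 + \<psi>\<^sub>2\<close> with \<open>\<psi>\<^sub>2 = G(1,N-n) \<psi>\<close>. As
  \<open>H(1,N-n) \<psi>\<^sub>2 = 0\<close>, the energy splits into \<open>\<langle>\<psi>\<^sub>1, H(1,N-n) \<psi>\<^sub>1\<rangle>\<close>, bounded by the induction
  hypothesis for \<open>\<psi>\<^sub>1 \<perp> \<G>(1,N-n)\<close>, and \<open>\<langle>\<psi>, H(N-n,N) \<psi>\<rangle> \<ge> \<gamma> \<parallel>(1 - G(N-n,N)) \<psi>\<parallel>\<^sup>2\<close>, the gap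
  of a block of length \<open>n + 1\<close>. What remains is geometry: the projection \<open>G(1,N-2n)\<close> commutes
  with \<open>G(N-n,N)\<close> and fixes \<open>\<psi>\<^sub>2\<close>, which reduces everything to two orthogonal vectors
  \<open>\<phi>\<^sub>1 = G(1,N-2n) \<psi>\<^sub>1\<close> and \<open>\<phi>\<^sub>2 = \<psi>\<^sub>2\<close>, where \<open>\<parallel>G(N-n,N) \<phi>\<^sub>2\<parallel>\<^sup>2 \<le> \<epsilon> \<parallel>\<phi>\<^sub>2\<parallel>\<^sup>2\<close> by the definition
  of \<open>\<epsilon>\<close> (after translating the chain and slicing off the sites beyond \<open>N\<close>). An
  elementary estimate in the plane, with \<open>cos \<theta> = \<surd>(1 - \<epsilon>)\<close> and \<open>sin \<theta> = \<surd>\<epsilon>\<close>, yields the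
  weights \<open>\<alpha>(\<epsilon>)\<close> and \<open>\<beta>(\<epsilon>)\<close>. Chains with \<open>N \<le> m + n\<close> are covered by the gap \<open>\<gamma>\<close> directly.\<close>

section \<open>Inner product geometry of \<open>H_[a,b]\<close>\<close>

definition vscale :: "complex \<Rightarrow> vec \<Rightarrow> vec" where
  "vscale c f = (\<lambda>\<sigma>. c * f \<sigma>)"

definition sqnorm :: "nat \<Rightarrow> int \<Rightarrow> int \<Rightarrow> vec \<Rightarrow> real" where
  "sqnorm D a b f = Re (inner_sp D a b f f)"

lemma finite_cfgs: "finite (cfgs D a b)"
proof -
  have "cfgs D a b \<subseteq> (\<lambda>g x. if a \<le> x \<and> x \<le> b then g x else 0) ` ({a..b} \<rightarrow>\<^sub>E {..<D})"
  proof
    fix \<sigma> assume "\<sigma> \<in> cfgs D a b"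
    then show "\<sigma> \<in> (\<lambda>g x. if a \<le> x \<and> x \<le> b then g x else 0) ` ({a..b} \<rightarrow>\<^sub>E {..<D})"
      by (intro image_eqI[where x = "restrict \<sigma> {a..b}"]) (auto simp: cfgs_def)
  qed
  moreover have "finite ({a..b} \<rightarrow>\<^sub>E {..<D::nat})"
    by (rule finite_PiE) auto
  ultimately show ?thesis
    by (meson finite_imageI finite_subset)
qed

lemma inner_sp_add_right: "inner_sp D a b f (g + h) = inner_sp D a b f g + inner_sp D a b f h"
  by (simp add: inner_sp_def sum.distrib distrib_left)

lemma inner_sp_add_left: "inner_sp D a b (f + g) h = inner_sp D a b f h + inner_sp D a b g h"
  by (simp add: inner_sp_def sum.distrib distrib_right)

lemma inner_sp_diff_right: "inner_sp D a b f (g - h) = inner_sp D a b f g - inner_sp D a b f h"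
  by (simp add: inner_sp_def sum_subtractf right_diff_distrib)

lemma inner_sp_diff_left: "inner_sp D a b (f - g) h = inner_sp D a b f h - inner_sp D a b g h"
  by (simp add: inner_sp_def sum_subtractf left_diff_distrib)

lemma inner_sp_scale_right: "inner_sp D a b f (vscale c g) = c * inner_sp D a b f g"
  by (simp add: inner_sp_def vscale_def sum_distrib_left algebra_simps)

lemma inner_sp_scale_left: "inner_sp D a b (vscale c f) g = cnj c * inner_sp D a b f g"
  by (simp add: inner_sp_def vscale_def sum_distrib_left algebra_simps)

lemma cnj_inner_sp: "cnj (inner_sp D a b f g) = inner_sp D a b g f"
  by (simp add: inner_sp_def mult.commute)

lemma inner_sp_eq_0_commute: "inner_sp D a b f g = 0 \<Longrightarrow> inner_sp D a b g f = 0"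
  by (metis cnj_inner_sp complex_cnj_zero)

lemma inner_sp_zero_right [simp]: "inner_sp D a b f 0 = 0"
  by (simp add: inner_sp_def)

lemma inner_sp_zero_left [simp]: "inner_sp D a b 0 f = 0"
  by (simp add: inner_sp_def)

lemma sqnorm_eq_sum: "sqnorm D a b f = (\<Sum>\<sigma>\<in>cfgs D a b. (cmod (f \<sigma>))\<^sup>2)"
  unfolding sqnorm_def inner_sp_def Re_sum
  by (rule sum.cong) (simp_all add: complex_norm_square[symmetric] mult.commute)

lemma sqnorm_nonneg: "sqnorm D a b f \<ge> 0"
  unfolding sqnorm_eq_sum by (simp add: sum_nonneg)

lemma inner_sp_self: "inner_sp D a b f f = of_real (sqnorm D a b f)"
  unfolding sqnorm_eq_sum inner_sp_def of_real_sum
  by (rule sum.cong) (simp_all add: complex_norm_square[symmetric] mult.commute)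

lemma norm_sp_power2: "(norm_sp D a b f)\<^sup>2 = sqnorm D a b f"
  unfolding norm_sp_def sqnorm_def[symmetric] using sqnorm_nonneg by simp

lemma sqnorm_eq_0_imp_zero: "sqnorm D a b f = 0 \<Longrightarrow> \<sigma> \<in> cfgs D a b \<Longrightarrow> f \<sigma> = 0"
  unfolding sqnorm_eq_sum using finite_cfgs
  by (metis (no_types, lifting) norm_eq_zero sum_nonneg_eq_0_iff zero_eq_power2 zero_le_power2)

lemma vecs_eq_zeroI: "f \<in> vecs D a b \<Longrightarrow> (\<And>\<sigma>. \<sigma> \<in> cfgs D a b \<Longrightarrow> f \<sigma> = 0) \<Longrightarrow> f = 0"
  unfolding vecs_def by (rule ext) auto

lemma vecs_sqnorm_eq_0: "f \<in> vecs D a b \<Longrightarrow> sqnorm D a b f = 0 \<Longrightarrow> f = 0"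
  using vecs_eq_zeroI sqnorm_eq_0_imp_zero by blast

lemma inner_sp_Cauchy_Schwarz:
  "cmod (inner_sp D a b f g) \<le> sqrt (sqnorm D a b f) * sqrt (sqnorm D a b g)"
proof -
  have "cmod (inner_sp D a b f g) \<le> (\<Sum>\<sigma>\<in>cfgs D a b. cmod (cnj (f \<sigma>) * g \<sigma>))"
    unfolding inner_sp_def by (rule norm_sum)
  also have "\<dots> = (\<Sum>\<sigma>\<in>cfgs D a b. \<bar>cmod (f \<sigma>)\<bar> * \<bar>cmod (g \<sigma>)\<bar>)"
    by (simp add: norm_mult)
  also have "\<dots> \<le> L2_set (\<lambda>\<sigma>. cmod (f \<sigma>)) (cfgs D a b) * L2_set (\<lambda>\<sigma>. cmod (g \<sigma>)) (cfgs D a b)"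
    by (rule L2_set_mult_ineq)
  also have "\<dots> = sqrt (sqnorm D a b f) * sqrt (sqnorm D a b g)"
    by (simp add: L2_set_def sqnorm_eq_sum)
  finally show ?thesis .
qed

lemma inner_sp_normalized:
  assumes "sqnorm D a b f > 0"
  defines "k \<equiv> complex_of_real (1 / sqrt (sqnorm D a b f))"
  shows "inner_sp D a b (vscale k g) (vscale k h) = inner_sp D a b g h / of_real (sqnorm D a b f)"
proof -
  have "inner_sp D a b (vscale k g) (vscale k h) = (cnj k * k) * inner_sp D a b g h"
    by (simp add: inner_sp_scale_left inner_sp_scale_right mult_ac)
  also have "cnj k * k = complex_of_real (1 / sqrt (sqnorm D a b f) * (1 / sqrt (sqnorm D a b f)))"
    unfolding k_def by (simp only: complex_cnj_complex_of_real of_real_mult)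
  also have "\<dots> = 1 / of_real (sqnorm D a b f)"
    using assms(1) by (simp add: real_sqrt_mult_self)
  finally show ?thesis by simp
qed

lemma sqnorm_diff_scale:
  "sqnorm D a b (f - vscale (of_real \<mu>) g)
     = sqnorm D a b f - 2 * \<mu> * Re (inner_sp D a b f g) + \<mu>\<^sup>2 * sqnorm D a b g"
proof -
  have "Re (inner_sp D a b g f) = Re (inner_sp D a b f g)"
    unfolding cnj_inner_sp[of D a b f g, symmetric] by simp
  then show ?thesis
    by (simp add: sqnorm_def inner_sp_diff_left inner_sp_diff_right inner_sp_scale_left
        inner_sp_scale_right power2_eq_square algebra_simps)
qed

lemma vecs_add: "f \<in> vecs D a b \<Longrightarrow> g \<in> vecs D a b \<Longrightarrow> f + g \<in> vecs D a b"
  by (simp add: vecs_def)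

lemma vecs_diff: "f \<in> vecs D a b \<Longrightarrow> g \<in> vecs D a b \<Longrightarrow> f - g \<in> vecs D a b"
  by (simp add: vecs_def)

lemma vecs_scale: "f \<in> vecs D a b \<Longrightarrow> vscale c f \<in> vecs D a b"
  by (simp add: vecs_def vscale_def)

lemma vscale_zero [simp]: "vscale c 0 = 0"
  by (simp add: vscale_def zero_fun_def)

lemma zero_in_vecs [simp]: "0 \<in> vecs D a b"
  by (simp add: vecs_def)

section \<open>Orthogonal projections\<close>

definition is_subspace :: "nat \<Rightarrow> int \<Rightarrow> int \<Rightarrow> vec set \<Rightarrow> bool" where
  "is_subspace D a b S \<longleftrightarrow> S \<subseteq> vecs D a b \<and> 0 \<in> S \<and> (\<forall>f\<in>S. \<forall>g\<in>S. f + g \<in> S)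
     \<and> (\<forall>c. \<forall>f\<in>S. vscale c f \<in> S)"

lemma is_subspace_add: "is_subspace D a b S \<Longrightarrow> f \<in> S \<Longrightarrow> g \<in> S \<Longrightarrow> f + g \<in> S"
  unfolding is_subspace_def by blast

lemma is_subspace_scale: "is_subspace D a b S \<Longrightarrow> f \<in> S \<Longrightarrow> vscale c f \<in> S"
  unfolding is_subspace_def by blast

lemma is_subspace_zero: "is_subspace D a b S \<Longrightarrow> 0 \<in> S"
  unfolding is_subspace_def by blast

lemma is_subspace_vecs: "is_subspace D a b S \<Longrightarrow> f \<in> S \<Longrightarrow> f \<in> vecs D a b"
  unfolding is_subspace_def by blast

lemma is_subspace_diff:
  assumes "is_subspace D a b S" "f \<in> S" "g \<in> S"
  shows "f - g \<in> S"
proof -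
  have "f - g = f + vscale (-1) g"
    by (simp add: vscale_def fun_eq_iff)
  then show ?thesis
    using assms by (metis is_subspace_add is_subspace_scale)
qed

lemma is_subspace_vanishing_at:
  "is_subspace D a b S \<Longrightarrow> is_subspace D a b {h \<in> S. h c = 0}"
  unfolding is_subspace_def by (auto simp: vscale_def)

text \<open>Existence of orthogonal projections, by induction on the set of configurations carrying
  the subspace: one more configuration \<open>c\<close> adds at most one direction \<open>r\<close>, orthogonal to the
  vectors vanishing at \<open>c\<close>.\<close>

lemma orth_proj_exists_step:
  assumes S: "is_subspace D a b S" and c: "c \<in> cfgs D a b"
    and IH: "\<And>f. \<exists>g\<in>{h \<in> S. h c = 0}. \<forall>u\<in>{h \<in> S. h c = 0}. inner_sp D a b u (f - g) = 0"
  shows "\<exists>g\<in>S. \<forall>u\<in>S. inner_sp D a b u (f - g) = 0"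
proof (cases "\<forall>h\<in>S. h c = 0")
  case True
  then have "{h \<in> S. h c = 0} = S" by auto
  then show ?thesis using IH by simp
next
  case False
  let ?S' = "{h \<in> S. h c = 0}"
  obtain h0 where h0: "h0 \<in> S" "h0 c \<noteq> 0" using False by auto
  obtain q where q: "q \<in> ?S'" "\<forall>u\<in>?S'. inner_sp D a b u (h0 - q) = 0" using IH by blast
  define r where "r = h0 - q"
  have r: "r \<in> S" "r c \<noteq> 0" "\<forall>u\<in>?S'. inner_sp D a b u r = 0"
    using q h0 is_subspace_diff[OF S] unfolding r_def by auto
  have rr: "inner_sp D a b r r \<noteq> 0"
    using sqnorm_eq_0_imp_zero[OF _ c] r(2) by (auto simp: inner_sp_self)
  obtain p where p: "p \<in> ?S'" "\<forall>u\<in>?S'. inner_sp D a b u (f - p) = 0" using IH by blast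
  define \<kappa> where "\<kappa> = inner_sp D a b r (f - p) / inner_sp D a b r r"
  have "\<forall>u\<in>S. inner_sp D a b u (f - (p + vscale \<kappa> r)) = 0"
  proof
    fix u assume u: "u \<in> S"
    define \<theta> where "\<theta> = u c / r c"
    have "u - vscale \<theta> r \<in> S"
      by (rule is_subspace_diff[OF S u is_subspace_scale[OF S r(1)]])
    moreover have "(u - vscale \<theta> r) c = 0"
      using r(2) by (simp add: vscale_def \<theta>_def)
    ultimately have u': "u - vscale \<theta> r \<in> ?S'" by simp
    have "inner_sp D a b u (f - (p + vscale \<kappa> r))
        = inner_sp D a b (u - vscale \<theta> r) (f - p) - \<kappa> * inner_sp D a b (u - vscale \<theta> r) r
          + cnj \<theta> * (inner_sp D a b r (f - p) - \<kappa> * inner_sp D a b r r)"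
      by (simp add: inner_sp_diff_left inner_sp_diff_right inner_sp_add_right inner_sp_scale_left
          inner_sp_scale_right algebra_simps)
    then show "inner_sp D a b u (f - (p + vscale \<kappa> r)) = 0"
      using p(2) r(3) u' rr by (simp add: \<kappa>_def)
  qed
  moreover have "p + vscale \<kappa> r \<in> S"
    using p(1) by (simp add: is_subspace_add[OF S] is_subspace_scale[OF S r(1)])
  ultimately show ?thesis by blast
qed

lemma orth_proj_exists:
  assumes S: "is_subspace D a b S"
  shows "\<exists>g\<in>S. \<forall>u\<in>S. inner_sp D a b u (f - g) = 0"
proof -
  have supported: "\<exists>g\<in>S. \<forall>u\<in>S. inner_sp D a b u (f - g) = 0"
    if "finite C" "C \<subseteq> cfgs D a b" "is_subspace D a b S" "\<forall>h\<in>S. \<forall>\<sigma>. \<sigma> \<notin> C \<longrightarrow> h \<sigma> = 0"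
    for C S f
    using that
  proof (induction C arbitrary: S f rule: finite_induct)
    case empty
    then have "S = {0}" using is_subspace_zero by (auto simp: fun_eq_iff)
    then show ?case by (metis inner_sp_zero_left singletonD singletonI)
  next
    case (insert c C)
    show ?case
    proof (rule orth_proj_exists_step[OF insert.prems(2)])
      show "c \<in> cfgs D a b" using insert.prems(1) by simp
      show "\<exists>g\<in>{h \<in> S. h c = 0}. \<forall>u\<in>{h \<in> S. h c = 0}. inner_sp D a b u (f - g) = 0" for f
        using insert.prems by (intro insert.IH is_subspace_vanishing_at) auto
    qed
  qed
  have "\<forall>h\<in>S. \<forall>\<sigma>. \<sigma> \<notin> cfgs D a b \<longrightarrow> h \<sigma> = 0"
    using is_subspace_vecs[OF S] unfolding vecs_def by blast
  then show ?thesis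
    by (rule supported[OF finite_cfgs order_refl S])
qed

lemma orth_proj_unique:
  assumes S: "is_subspace D a b S"
    and g1: "g1 \<in> S" "\<forall>u\<in>S. inner_sp D a b u (f - g1) = 0"
    and g2: "g2 \<in> S" "\<forall>u\<in>S. inner_sp D a b u (f - g2) = 0"
  shows "g1 = g2"
proof -
  have d: "g1 - g2 \<in> S" by (rule is_subspace_diff[OF S g1(1) g2(1)])
  have "g1 - g2 = (f - g2) - (f - g1)" by simp
  then have "inner_sp D a b (g1 - g2) (g1 - g2) = 0"
    using g1(2) g2(2) d by (metis inner_sp_diff_right diff_self)
  then show ?thesis
    using vecs_sqnorm_eq_0[OF is_subspace_vecs[OF S d]] by (simp add: inner_sp_self)
qed

lemma proj_char:
  assumes "is_subspace D a b S"
  shows "proj D a b S f \<in> S \<and> (\<forall>u\<in>S. inner_sp D a b u (f - proj D a b S f) = 0)"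
proof -
  have "\<exists>!g. g \<in> S \<and> (\<forall>u\<in>S. inner_sp D a b u (f - g) = 0)"
    using orth_proj_exists[OF assms] orth_proj_unique[OF assms] by blast
  then have "\<exists>!g. g \<in> S \<and> (\<forall>u\<in>S. inner_sp D a b u (\<lambda>\<sigma>. f \<sigma> - g \<sigma>) = 0)"
    by (simp only: fun_diff_def)
  then show ?thesis
    unfolding proj_def fun_diff_def by (rule theI')
qed

lemma proj_in: "is_subspace D a b S \<Longrightarrow> proj D a b S f \<in> S"
  using proj_char by blast

lemma proj_orth: "is_subspace D a b S \<Longrightarrow> u \<in> S \<Longrightarrow> inner_sp D a b u (f - proj D a b S f) = 0"
  using proj_char by blast

lemma proj_orth_self: "is_subspace D a b S \<Longrightarrow> inner_sp D a b (proj D a b S f) (f - proj D a b S f) = 0"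
  using proj_orth proj_in by blast

lemma proj_eqI:
  assumes S: "is_subspace D a b S" and g: "g \<in> S"
    and orth: "\<And>u. u \<in> S \<Longrightarrow> inner_sp D a b u (f - g) = 0"
  shows "proj D a b S f = g"
  using orth_proj_unique[OF S proj_in[OF S] _ g] orth proj_orth[OF S] by blast

lemma proj_in_vecs: "is_subspace D a b S \<Longrightarrow> proj D a b S f \<in> vecs D a b"
  using proj_in is_subspace_vecs by blast

lemma proj_eq_self: "is_subspace D a b S \<Longrightarrow> f \<in> S \<Longrightarrow> proj D a b S f = f"
  by (rule proj_eqI) simp_all

lemma proj_add:
  assumes S: "is_subspace D a b S"
  shows "proj D a b S (f + g) = proj D a b S f + proj D a b S g"
proof (rule proj_eqI[OF S])
  show "proj D a b S f + proj D a b S g \<in> S"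
    by (rule is_subspace_add[OF S proj_in[OF S] proj_in[OF S]])
  have eq: "f + g - (proj D a b S f + proj D a b S g) = (f - proj D a b S f) + (g - proj D a b S g)"
    by (simp add: algebra_simps)
  show "inner_sp D a b u (f + g - (proj D a b S f + proj D a b S g)) = 0" if "u \<in> S" for u
    unfolding eq inner_sp_add_right using proj_orth[OF S that, of f] proj_orth[OF S that, of g] by simp
qed

lemma proj_scale:
  assumes S: "is_subspace D a b S"
  shows "proj D a b S (vscale c f) = vscale c (proj D a b S f)"
proof (rule proj_eqI[OF S])
  show "vscale c (proj D a b S f) \<in> S"
    by (rule is_subspace_scale[OF S proj_in[OF S]])
  have eq: "vscale c f - vscale c (proj D a b S f) = vscale c (f - proj D a b S f)"
    by (simp add: vscale_def fun_eq_iff algebra_simps)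
  show "inner_sp D a b u (vscale c f - vscale c (proj D a b S f)) = 0" if "u \<in> S" for u
    unfolding eq inner_sp_scale_right using proj_orth[OF S that, of f] by simp
qed

lemma proj_diff:
  assumes S: "is_subspace D a b S"
  shows "proj D a b S (f - g) = proj D a b S f - proj D a b S g"
proof (rule proj_eqI[OF S])
  show "proj D a b S f - proj D a b S g \<in> S"
    by (rule is_subspace_diff[OF S proj_in[OF S] proj_in[OF S]])
  have eq: "f - g - (proj D a b S f - proj D a b S g) = (f - proj D a b S f) - (g - proj D a b S g)"
    by (simp add: algebra_simps)
  show "inner_sp D a b u (f - g - (proj D a b S f - proj D a b S g)) = 0" if "u \<in> S" for u
    unfolding eq using proj_orth[OF S that, of f] proj_orth[OF S that, of g]
    by (simp add: inner_sp_diff_right)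
qed

lemma proj_eq_0_iff:
  assumes S: "is_subspace D a b S"
  shows "proj D a b S f = 0 \<longleftrightarrow> (\<forall>u\<in>S. inner_sp D a b u f = 0)"
  using proj_eqI[OF S is_subspace_zero[OF S], of f] proj_orth[OF S, of _ f] by auto

lemma proj_self_adjoint:
  assumes S: "is_subspace D a b S"
  shows "inner_sp D a b (proj D a b S f) g = inner_sp D a b f (proj D a b S g)"
  using proj_orth[OF S proj_in[OF S], of f g] inner_sp_eq_0_commute[OF proj_orth[OF S proj_in[OF S], of g f]]
  by (simp add: inner_sp_diff_right inner_sp_diff_left)

lemma sqnorm_proj_pythagoras:
  assumes S: "is_subspace D a b S"
  shows "sqnorm D a b f = sqnorm D a b (proj D a b S f) + sqnorm D a b (f - proj D a b S f)"
proof -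
  let ?P = "proj D a b S"
  have "inner_sp D a b f f = inner_sp D a b (?P f + (f - ?P f)) (?P f + (f - ?P f))"
    by simp
  also have "\<dots> = inner_sp D a b (?P f) (?P f) + inner_sp D a b (f - ?P f) (f - ?P f)"
    unfolding inner_sp_add_left inner_sp_add_right
    using proj_orth_self[OF S, of f] inner_sp_eq_0_commute[OF proj_orth_self[OF S, of f]] by simp
  finally show ?thesis unfolding sqnorm_def by simp
qed

lemma sqnorm_proj_le: "is_subspace D a b S \<Longrightarrow> sqnorm D a b (proj D a b S f) \<le> sqnorm D a b f"
  using sqnorm_proj_pythagoras[of D a b S f] sqnorm_nonneg[of D a b "f - proj D a b S f"] by linarith

lemma inner_sp_proj_self:
  assumes S: "is_subspace D a b S"
  shows "inner_sp D a b f (proj D a b S f) = of_real (sqnorm D a b (proj D a b S f))"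
proof -
  have "inner_sp D a b f (proj D a b S f) = inner_sp D a b (proj D a b S f) (proj D a b S f)"
    using proj_self_adjoint[OF S, of f "proj D a b S f"] proj_eq_self[OF S proj_in[OF S]] by simp
  then show ?thesis by (simp add: inner_sp_self)
qed

lemma inner_sp_proj_complement:
  assumes S: "is_subspace D a b S"
  shows "inner_sp D a b f (f - proj D a b S f) = of_real (sqnorm D a b (f - proj D a b S f))"
proof -
  have "inner_sp D a b f (f - proj D a b S f)
      = inner_sp D a b (f - proj D a b S f) (f - proj D a b S f)
        + inner_sp D a b (proj D a b S f) (f - proj D a b S f)"
    by (simp add: inner_sp_diff_left)
  then show ?thesis
    using proj_orth_self[OF S, of f] by (simp add: inner_sp_self)
qed

lemma proj_proj_subset:
  assumes S1: "is_subspace D a b S1" and S2: "is_subspace D a b S2" and sub: "S1 \<subseteq> S2"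
  shows "proj D a b S1 (proj D a b S2 f) = proj D a b S1 f"
proof (rule proj_eqI[OF S1 proj_in[OF S1]])
  fix u assume u: "u \<in> S1"
  have "proj D a b S2 f - proj D a b S1 f = (f - proj D a b S1 f) - (f - proj D a b S2 f)"
    by (simp add: algebra_simps)
  then show "inner_sp D a b u (proj D a b S2 f - proj D a b S1 f) = 0"
    using proj_orth[OF S1 u, of f] proj_orth[OF S2, of u f] u sub
    by (auto simp: inner_sp_diff_right)
qed

section \<open>Locality: slices and translations\<close>

text \<open>\<open>H_[a,b] = H_outer \<otimes> H_[c,e]\<close> for \<open>[c,e] \<subseteq> [a,b]\<close>: a configuration of \<open>[a,b]\<close> is glued from one
  of \<open>[c,e]\<close> and an outer one vanishing on \<open>[c,e]\<close>, and \<open>slice D c e f \<rho>\<close> is the component of \<open>f\<close>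
  along the outer configuration \<open>\<rho>\<close>.\<close>

definition glue :: "int \<Rightarrow> int \<Rightarrow> cfg \<Rightarrow> cfg \<Rightarrow> cfg" where
  "glue c e \<sigma> \<rho> = (\<lambda>x. if c \<le> x \<and> x \<le> e then \<sigma> x else \<rho> x)"

definition restrict_to :: "int \<Rightarrow> int \<Rightarrow> cfg \<Rightarrow> cfg" where
  "restrict_to c e \<tau> = (\<lambda>x. if c \<le> x \<and> x \<le> e then \<tau> x else 0)"

definition erase_on :: "int \<Rightarrow> int \<Rightarrow> cfg \<Rightarrow> cfg" where
  "erase_on c e \<tau> = (\<lambda>x. if c \<le> x \<and> x \<le> e then 0 else \<tau> x)"

definition outer_cfgs :: "nat \<Rightarrow> int \<Rightarrow> int \<Rightarrow> int \<Rightarrow> int \<Rightarrow> cfg set" where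
  "outer_cfgs D a b c e = {\<rho> \<in> cfgs D a b. \<forall>x. c \<le> x \<and> x \<le> e \<longrightarrow> \<rho> x = 0}"

definition slice :: "nat \<Rightarrow> int \<Rightarrow> int \<Rightarrow> vec \<Rightarrow> cfg \<Rightarrow> vec" where
  "slice D c e f \<rho> = (\<lambda>\<sigma>. if \<sigma> \<in> cfgs D c e then f (glue c e \<sigma> \<rho>) else 0)"

definition unslice :: "nat \<Rightarrow> int \<Rightarrow> int \<Rightarrow> int \<Rightarrow> int \<Rightarrow> (cfg \<Rightarrow> vec) \<Rightarrow> vec" where
  "unslice D a b c e F = (\<lambda>\<tau>. if \<tau> \<in> cfgs D a b then F (erase_on c e \<tau>) (restrict_to c e \<tau>) else 0)"

lemma erase_on_glue: "\<rho> \<in> outer_cfgs D a b c e \<Longrightarrow> erase_on c e (glue c e \<sigma> \<rho>) = \<rho>"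
  by (auto simp: erase_on_def glue_def outer_cfgs_def fun_eq_iff)

lemma restrict_to_glue: "\<sigma> \<in> cfgs D c e \<Longrightarrow> restrict_to c e (glue c e \<sigma> \<rho>) = \<sigma>"
  by (auto simp: restrict_to_def glue_def cfgs_def fun_eq_iff)

lemma glue_restrict_to_erase_on: "glue c e (restrict_to c e \<tau>) (erase_on c e \<tau>) = \<tau>"
  by (auto simp: restrict_to_def glue_def erase_on_def fun_eq_iff)

lemma glue_in_cfgs:
  "a \<le> c \<Longrightarrow> e \<le> b \<Longrightarrow> \<sigma> \<in> cfgs D c e \<Longrightarrow> \<rho> \<in> outer_cfgs D a b c e \<Longrightarrow> glue c e \<sigma> \<rho> \<in> cfgs D a b"
  by (auto simp: glue_def outer_cfgs_def cfgs_def)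

lemma erase_on_in_outer_cfgs: "\<tau> \<in> cfgs D a b \<Longrightarrow> erase_on c e \<tau> \<in> outer_cfgs D a b c e"
  by (auto simp: erase_on_def outer_cfgs_def cfgs_def)

lemma restrict_to_in_cfgs: "a \<le> c \<Longrightarrow> e \<le> b \<Longrightarrow> \<tau> \<in> cfgs D a b \<Longrightarrow> restrict_to c e \<tau> \<in> cfgs D c e"
  by (auto simp: restrict_to_def cfgs_def)

lemma bij_betw_glue:
  "a \<le> c \<Longrightarrow> e \<le> b \<Longrightarrow>
    bij_betw (\<lambda>(\<rho>, \<sigma>). glue c e \<sigma> \<rho>) (outer_cfgs D a b c e \<times> cfgs D c e) (cfgs D a b)"
  by (rule bij_betw_byWitness[where f' = "\<lambda>\<tau>. (erase_on c e \<tau>, restrict_to c e \<tau>)"])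
    (use erase_on_glue restrict_to_glue glue_restrict_to_erase_on glue_in_cfgs
      erase_on_in_outer_cfgs restrict_to_in_cfgs in fastforce)+

lemma sum_cfgs_glue:
  assumes "a \<le> c" "e \<le> b"
  shows "(\<Sum>\<tau>\<in>cfgs D a b. F \<tau>) = (\<Sum>\<rho>\<in>outer_cfgs D a b c e. \<Sum>\<sigma>\<in>cfgs D c e. F (glue c e \<sigma> \<rho>))"
proof -
  have "(\<Sum>\<rho>\<in>outer_cfgs D a b c e. \<Sum>\<sigma>\<in>cfgs D c e. F (glue c e \<sigma> \<rho>))
      = (\<Sum>x\<in>outer_cfgs D a b c e \<times> cfgs D c e. F ((\<lambda>(\<rho>, \<sigma>). glue c e \<sigma> \<rho>) x))"
    by (subst sum.cartesian_product) (auto intro!: sum.cong split: prod.splits)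
  also have "\<dots> = (\<Sum>\<tau>\<in>cfgs D a b. F \<tau>)"
    by (rule sum.reindex_bij_betw[OF bij_betw_glue[OF assms]])
  finally show ?thesis by simp
qed

lemma inner_sp_slice:
  assumes "a \<le> c" "e \<le> b"
  shows "inner_sp D a b f g
    = (\<Sum>\<rho>\<in>outer_cfgs D a b c e. inner_sp D c e (slice D c e f \<rho>) (slice D c e g \<rho>))"
  unfolding inner_sp_def sum_cfgs_glue[OF assms, where F = "\<lambda>\<tau>. cnj (f \<tau>) * g \<tau>"]
  by (intro sum.cong refl) (simp add: slice_def)

lemma sqnorm_slice:
  assumes "a \<le> c" "e \<le> b"
  shows "sqnorm D a b f = (\<Sum>\<rho>\<in>outer_cfgs D a b c e. sqnorm D c e (slice D c e f \<rho>))"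
  unfolding sqnorm_def inner_sp_slice[OF assms, of D f f] by simp

lemma slice_in_vecs: "slice D c e f \<rho> \<in> vecs D c e"
  by (simp add: slice_def vecs_def)

lemma slice_diff: "slice D c e (f - g) \<rho> = slice D c e f \<rho> - slice D c e g \<rho>"
  by (simp add: slice_def fun_eq_iff)

lemma slice_zero: "slice D c e 0 \<rho> = 0"
  by (simp add: slice_def fun_eq_iff)

lemma apply_eq_slice:
  "a \<le> c \<Longrightarrow> e \<le> b \<Longrightarrow> \<tau> \<in> cfgs D a b \<Longrightarrow> f \<tau> = slice D c e f (erase_on c e \<tau>) (restrict_to c e \<tau>)"
  by (simp add: slice_def restrict_to_in_cfgs glue_restrict_to_erase_on)

lemma unslice_in_vecs: "unslice D a b c e F \<in> vecs D a b"
  by (simp add: unslice_def vecs_def)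

lemma slice_unslice:
  assumes "a \<le> c" "e \<le> b" "\<rho> \<in> outer_cfgs D a b c e" "F \<rho> \<in> vecs D c e"
  shows "slice D c e (unslice D a b c e F) \<rho> = F \<rho>"
proof
  fix \<sigma>
  show "slice D c e (unslice D a b c e F) \<rho> \<sigma> = F \<rho> \<sigma>"
    using assms glue_in_cfgs[OF assms(1,2) _ assms(3)] erase_on_glue[OF assms(3)] restrict_to_glue
    by (auto simp: slice_def unslice_def vecs_def)
qed

definition shift_vec :: "int \<Rightarrow> vec \<Rightarrow> vec" where
  "shift_vec t f = (\<lambda>\<tau>. f (\<lambda>x. \<tau> (x + t)))"

lemma cfgs_shift: "(\<lambda>x. \<tau> (x + t)) \<in> cfgs D a b \<longleftrightarrow> \<tau> \<in> cfgs D (a + t) (b + t)"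
proof
  assume h: "(\<lambda>x. \<tau> (x + t)) \<in> cfgs D a b"
  show "\<tau> \<in> cfgs D (a + t) (b + t)"
    unfolding cfgs_def
  proof (intro CollectI conjI allI impI)
    fix x assume "a + t \<le> x \<and> x \<le> b + t"
    then show "\<tau> x < D" using h unfolding cfgs_def by (auto dest: spec[of _ "x - t"])
  next
    fix x assume "\<not> (a + t \<le> x \<and> x \<le> b + t)"
    then show "\<tau> x = 0" using h unfolding cfgs_def by (auto dest: spec[of _ "x - t"])
  qed
next
  assume "\<tau> \<in> cfgs D (a + t) (b + t)"
  then show "(\<lambda>x. \<tau> (x + t)) \<in> cfgs D a b"
    unfolding cfgs_def by auto
qed

lemma sum_cfgs_shift:
  "(\<Sum>\<tau>\<in>cfgs D (a + t) (b + t). F (\<lambda>x. \<tau> (x + t))) = (\<Sum>\<sigma>\<in>cfgs D a b. F \<sigma>)"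
  by (rule sum.reindex_bij_betw, rule bij_betw_byWitness[where f' = "\<lambda>\<sigma> x. \<sigma> (x - t)"])
    (use cfgs_shift[of _ t D a b] cfgs_shift[of _ "-t" D "a + t" "b + t"] in auto)

lemma shift_vec_in_vecs:
  "f \<in> vecs D a b \<Longrightarrow> a' = a + t \<Longrightarrow> b' = b + t \<Longrightarrow> shift_vec t f \<in> vecs D a' b'"
  unfolding vecs_def shift_vec_def using cfgs_shift by blast

lemma inner_sp_shift_vec:
  assumes "a' = a + t" "b' = b + t"
  shows "inner_sp D a' b' (shift_vec t f) (shift_vec t g) = inner_sp D a b f g"
  unfolding assms inner_sp_def shift_vec_def by (rule sum_cfgs_shift)

lemma sqnorm_shift_vec:
  "a' = a + t \<Longrightarrow> b' = b + t \<Longrightarrow> sqnorm D a' b' (shift_vec t f) = sqnorm D a b f"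
  unfolding sqnorm_def by (simp add: inner_sp_shift_vec)

lemma shift_vec_shift_vec: "shift_vec t (shift_vec (-t) f) = f"
  by (simp add: shift_vec_def)

lemma shift_vec_diff: "shift_vec t (f - g) = shift_vec t f - shift_vec t g"
  by (simp add: shift_vec_def fun_eq_iff)

lemma shift_vec_zero: "shift_vec t 0 = 0"
  by (simp add: shift_vec_def fun_eq_iff)


section \<open>The Hamiltonian\<close>

lemma Ham_in_vecs: "Ham D hm a b c e f \<in> vecs D a b"
  by (simp add: Ham_def bond_def vecs_def)

lemma bond_add: "bond D hm a b x (f + g) = bond D hm a b x f + bond D hm a b x g"
  by (simp add: bond_def fun_eq_iff sum.distrib distrib_left)

lemma bond_diff: "bond D hm a b x (f - g) = bond D hm a b x f - bond D hm a b x g"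
  by (simp add: bond_def fun_eq_iff sum_subtractf right_diff_distrib)

lemma bond_scale: "bond D hm a b x (vscale k f) = vscale k (bond D hm a b x f)"
  by (simp add: bond_def fun_eq_iff vscale_def sum_distrib_left algebra_simps)

lemma bond_sum: "bond D hm a b x (\<lambda>\<sigma>. \<Sum>y\<in>Y. g y \<sigma>) = (\<lambda>\<sigma>. \<Sum>y\<in>Y. bond D hm a b x (g y) \<sigma>)"
  by (simp add: bond_def fun_eq_iff sum_distrib_left sum.swap[of _ Y])

lemma Ham_add: "Ham D hm a b c e (f + g) = Ham D hm a b c e f + Ham D hm a b c e g"
  by (simp add: Ham_def bond_add fun_eq_iff sum.distrib)

lemma Ham_diff: "Ham D hm a b c e (f - g) = Ham D hm a b c e f - Ham D hm a b c e g"
  by (simp add: Ham_def bond_diff fun_eq_iff sum_subtractf)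

lemma Ham_scale: "Ham D hm a b c e (vscale k f) = vscale k (Ham D hm a b c e f)"
  unfolding Ham_def bond_scale by (simp add: fun_eq_iff vscale_def sum_distrib_left)

lemma Ham_zero: "Ham D hm a b c e 0 = 0"
  using Ham_scale[of D hm a b c e 0 0] by (simp add: vscale_def zero_fun_def)

lemma Ham_empty: "e \<le> c \<Longrightarrow> Ham D hm a b c e f = 0"
  by (simp add: Ham_def fun_eq_iff)

lemma Ham_split:
  assumes "c \<le> k" "k \<le> e"
  shows "Ham D hm a b c e f = Ham D hm a b c k f + Ham D hm a b k e f"
proof -
  have "{c..<e} = {c..<k} \<union> {k..<e}" using ivl_disj_un_two(3)[OF assms] by simp
  then show ?thesis unfolding Ham_def
    by (simp add: fun_eq_iff sum.union_disjoint[symmetric] ivl_disj_int_two)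
qed

lemma inner_sp_Ham:
  "inner_sp D a b f (Ham D hm a b c e g) = (\<Sum>x\<in>{c..<e}. inner_sp D a b f (bond D hm a b x g))"
  unfolding inner_sp_def Ham_def by (simp add: sum_distrib_left sum.swap[of _ "cfgs D a b"])

lemma upd_in_cfgs:
  "\<sigma> \<in> cfgs D a b \<Longrightarrow> a \<le> x \<Longrightarrow> x + 1 \<le> b \<Longrightarrow> k < D \<Longrightarrow> l < D \<Longrightarrow> \<sigma>(x := k, x + 1 := l) \<in> cfgs D a b"
  by (auto simp: cfgs_def)

lemma glue_upd:
  "c \<le> x \<Longrightarrow> x + 1 \<le> e \<Longrightarrow> glue c e (\<sigma>(x := k, x + 1 := l)) \<rho> = (glue c e \<sigma> \<rho>)(x := k, x + 1 := l)"
  by (auto simp: glue_def fun_eq_iff)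

lemma slice_bond:
  assumes ac: "a \<le> c" and eb: "e \<le> b" and x: "c \<le> x" "x + 1 \<le> e"
    and \<rho>: "\<rho> \<in> outer_cfgs D a b c e"
  shows "slice D c e (bond D hm a b x f) \<rho> = bond D hm c e x (slice D c e f \<rho>)"
proof
  fix \<sigma>
  show "slice D c e (bond D hm a b x f) \<rho> \<sigma> = bond D hm c e x (slice D c e f \<rho>) \<sigma>"
  proof (cases "\<sigma> \<in> cfgs D c e")
    case True
    have "glue c e \<sigma> \<rho> x = \<sigma> x" "glue c e \<sigma> \<rho> (x + 1) = \<sigma> (x + 1)"
      using x by (auto simp: glue_def)
    then show ?thesis
      using True glue_in_cfgs[OF ac eb True \<rho>]
      by (auto simp: slice_def bond_def upd_in_cfgs[OF True] x glue_upd intro!: sum.cong)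
  next
    case False
    then show ?thesis by (simp add: slice_def bond_def)
  qed
qed

lemma slice_Ham:
  assumes ac: "a \<le> c" and eb: "e \<le> b" and x: "c \<le> c0" "e0 \<le> e"
    and \<rho>: "\<rho> \<in> outer_cfgs D a b c e"
  shows "slice D c e (Ham D hm a b c0 e0 f) \<rho> = Ham D hm c e c0 e0 (slice D c e f \<rho>)"
proof
  fix \<sigma>
  have "slice D c e (Ham D hm a b c0 e0 f) \<rho> \<sigma> = (\<Sum>x\<in>{c0..<e0}. slice D c e (bond D hm a b x f) \<rho> \<sigma>)"
    by (simp add: slice_def Ham_def)
  also have "\<dots> = (\<Sum>x\<in>{c0..<e0}. bond D hm c e x (slice D c e f \<rho>) \<sigma>)"
    using slice_bond[OF ac eb _ _ \<rho>] x by (intro sum.cong refl) auto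
  finally show "slice D c e (Ham D hm a b c0 e0 f) \<rho> \<sigma> = Ham D hm c e c0 e0 (slice D c e f \<rho>) \<sigma>"
    by (simp add: Ham_def)
qed

lemma bond_shift_vec:
  "bond D hm (a + t) (b + t) (x + t) (shift_vec t f) = shift_vec t (bond D hm a b x f)"
proof
  fix \<tau> :: cfg
  have upd: "(\<lambda>y. (\<tau>(x + t := k, x + t + 1 := l)) (y + t)) = (\<lambda>y. \<tau> (y + t))(x := k, x + 1 := l)" for k l
    by (auto simp: fun_eq_iff)
  show "bond D hm (a + t) (b + t) (x + t) (shift_vec t f) \<tau> = shift_vec t (bond D hm a b x f) \<tau>"
    unfolding bond_def shift_vec_def cfgs_shift[symmetric] upd
    by (simp add: add.commute add.left_commute)
qed

lemma Ham_shift_vec: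
  assumes "a' = a + t" "b' = b + t" "c' = c + t" "e' = e + t"
  shows "Ham D hm a' b' c' e' (shift_vec t f) = shift_vec t (Ham D hm a b c e f)"
  unfolding assms
proof
  fix \<tau> :: cfg
  have img: "{c + t..<e + t} = (\<lambda>x. x + t) ` {c..<e}"
    by (auto simp: image_iff intro!: bexI[of _ "_ - t"])
  have "Ham D hm (a + t) (b + t) (c + t) (e + t) (shift_vec t f) \<tau>
      = (\<Sum>x\<in>{c..<e}. bond D hm (a + t) (b + t) (x + t) (shift_vec t f) \<tau>)"
    unfolding Ham_def img by (subst sum.reindex) (auto simp: inj_on_def)
  also have "\<dots> = (\<Sum>x\<in>{c..<e}. shift_vec t (bond D hm a b x f) \<tau>)"
    by (simp add: bond_shift_vec)
  finally show "Ham D hm (a + t) (b + t) (c + t) (e + t) (shift_vec t f) \<tau> = shift_vec t (Ham D hm a b c e f) \<tau>"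
    by (simp add: Ham_def shift_vec_def)
qed

definition pair_cfg :: "int \<Rightarrow> nat \<Rightarrow> nat \<Rightarrow> cfg" where
  "pair_cfg x i j = (\<lambda>y. if y = x then i else if y = x + 1 then j else 0)"

lemma sum_cfgs_pair: "(\<Sum>\<sigma>\<in>cfgs D x (x + 1). F \<sigma>) = (\<Sum>i<D. \<Sum>j<D. F (pair_cfg x i j))"
proof -
  have "bij_betw (\<lambda>(i, j). pair_cfg x i j) ({..<D} \<times> {..<D}) (cfgs D x (x + 1))"
    by (rule bij_betw_byWitness[where f' = "\<lambda>\<sigma>. (\<sigma> x, \<sigma> (x + 1))"])
      (auto simp: pair_cfg_def cfgs_def fun_eq_iff)
  then have "(\<Sum>\<sigma>\<in>cfgs D x (x + 1). F \<sigma>) = (\<Sum>p\<in>{..<D} \<times> {..<D}. F ((\<lambda>(i, j). pair_cfg x i j) p))"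
    by (rule sum.reindex_bij_betw[symmetric])
  then show ?thesis
    unfolding sum.cartesian_product by (simp add: split_def)
qed

lemma inner_sp_local_bond:
  "inner_sp D x (x + 1) g (bond D hm x (x + 1) x g)
   = (\<Sum>i<D. \<Sum>j<D. \<Sum>k<D. \<Sum>l<D. cnj (g (pair_cfg x i j)) * hm i j k l * g (pair_cfg x k l))"
proof -
  have "pair_cfg x i j \<in> cfgs D x (x + 1)" if "i < D" "j < D" for i j
    using that by (auto simp: pair_cfg_def cfgs_def)
  moreover have "(pair_cfg x i j)(x := k, x + 1 := l) = pair_cfg x k l" for i j k l
    by (auto simp: pair_cfg_def fun_eq_iff)
  moreover have "pair_cfg x i j x = i" "pair_cfg x i j (x + 1) = j" for i j
    by (auto simp: pair_cfg_def)
  ultimately show ?thesis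
    unfolding inner_sp_def sum_cfgs_pair
    by (intro sum.cong refl) (simp add: bond_def sum_distrib_left mult.assoc)
qed

lemma inner_sp_bond_nonneg:
  assumes pos: "positive_int D hm" and ax: "a \<le> x" and xb: "x + 1 \<le> b"
  shows "Im (inner_sp D a b f (bond D hm a b x f)) = 0 \<and> Re (inner_sp D a b f (bond D hm a b x f)) \<ge> 0"
proof -
  have local: "Im (inner_sp D x (x + 1) g (bond D hm x (x + 1) x g)) = 0 \<and>
               Re (inner_sp D x (x + 1) g (bond D hm x (x + 1) x g)) \<ge> 0" for g
    using pos unfolding positive_int_def inner_sp_local_bond Let_def
    by (erule_tac x = "\<lambda>i j. g (pair_cfg x i j)" in allE) simp
  have "inner_sp D a b f (bond D hm a b x f)
      = (\<Sum>\<rho>\<in>outer_cfgs D a b x (x + 1).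
           inner_sp D x (x + 1) (slice D x (x + 1) f \<rho>) (bond D hm x (x + 1) x (slice D x (x + 1) f \<rho>)))"
    unfolding inner_sp_slice[OF ax xb, of D f]
    by (intro sum.cong refl) (simp add: slice_bond[OF ax xb order_refl order_refl])
  then show ?thesis
    using local by (simp add: Im_sum Re_sum sum_nonneg)
qed

lemma inner_sp_Ham_nonneg:
  assumes pos: "positive_int D hm" and ac: "a \<le> c" and eb: "e \<le> b"
  shows "Im (inner_sp D a b f (Ham D hm a b c e f)) = 0 \<and> Re (inner_sp D a b f (Ham D hm a b c e f)) \<ge> 0"
proof -
  have "Im (inner_sp D a b f (bond D hm a b x f)) = 0 \<and> Re (inner_sp D a b f (bond D hm a b x f)) \<ge> 0"
    if "x \<in> {c..<e}" for x
    using inner_sp_bond_nonneg[OF pos] ac eb that by auto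
  then show ?thesis
    unfolding inner_sp_Ham Im_sum Re_sum by (auto intro!: sum_nonneg sum.neutral)
qed

text \<open>Polarization: \<open>\<langle>f, T g\<rangle>\<close> is recovered from the quadratic form at \<open>f + g\<close> and \<open>f + i g\<close>.\<close>

lemma hermitian_if_real_quadratic_form:
  fixes T :: "vec \<Rightarrow> vec"
  assumes add: "\<And>f g. T (f + g) = T f + T g" and scale: "\<And>k f. T (vscale k f) = vscale k (T f)"
    and real: "\<And>f. f \<in> vecs D a b \<Longrightarrow> Im (inner_sp D a b f (T f)) = 0"
    and f: "f \<in> vecs D a b" and g: "g \<in> vecs D a b"
  shows "inner_sp D a b f (T g) = cnj (inner_sp D a b g (T f))"
proof -
  let ?q = "\<lambda>u v. inner_sp D a b u (T v)"
  have sum: "?q (f + g) (f + g) = ?q f f + ?q f g + ?q g f + ?q g g"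
    by (simp add: add inner_sp_add_left inner_sp_add_right)
  have "?q (f + vscale \<i> g) (f + vscale \<i> g) = inner_sp D a b (f + vscale \<i> g) (T f + vscale \<i> (T g))"
    by (simp only: add scale)
  also have "\<dots> = ?q f f + cnj \<i> * ?q g f + \<i> * (?q f g + cnj \<i> * ?q g g)"
    by (simp only: inner_sp_add_left inner_sp_add_right inner_sp_scale_left inner_sp_scale_right)
  finally have sum_i: "?q (f + vscale \<i> g) (f + vscale \<i> g)
      = ?q f f + cnj \<i> * ?q g f + \<i> * (?q f g + cnj \<i> * ?q g g)" .
  have "f + g \<in> vecs D a b" "f + vscale \<i> g \<in> vecs D a b"
    using f g by (auto intro: vecs_add vecs_scale)
  then have "Im (?q f g) + Im (?q g f) = 0" "Re (?q f g) - Re (?q g f) = 0"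
    using real[of "f + g"] real[of "f + vscale \<i> g"] real[OF f] real[OF g] sum sum_i by simp_all
  then show ?thesis by (intro complex_eqI) auto
qed

text \<open>If \<open>T \<ge> 0\<close> and \<open>\<langle>f, T f\<rangle> = 0\<close>, the form is negative at \<open>f - t T f\<close> for small \<open>t > 0\<close>
  unless \<open>T f = 0\<close>.\<close>

lemma positive_op_kernel:
  fixes T :: "vec \<Rightarrow> vec"
  assumes add: "\<And>f g. T (f + g) = T f + T g" and scale: "\<And>k f. T (vscale k f) = vscale k (T f)"
    and real: "\<And>f. f \<in> vecs D a b \<Longrightarrow> Im (inner_sp D a b f (T f)) = 0"
    and pos: "\<And>f. f \<in> vecs D a b \<Longrightarrow> Re (inner_sp D a b f (T f)) \<ge> 0"
    and T_vecs: "\<And>f. T f \<in> vecs D a b"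
    and f: "f \<in> vecs D a b" and z: "inner_sp D a b f (T f) = 0"
  shows "T f = 0"
proof (rule ccontr)
  assume "T f \<noteq> 0"
  let ?g = "T f"
  let ?q = "\<lambda>u v. inner_sp D a b u (T v)"
  define N where "N = sqnorm D a b ?g"
  define M where "M = Re (?q ?g ?g)"
  define t where "t = N / (M + 1)"
  have N0: "N > 0"
    using \<open>T f \<noteq> 0\<close> vecs_sqnorm_eq_0[OF T_vecs] sqnorm_nonneg[of D a b ?g]
    unfolding N_def by fastforce
  have M0: "M \<ge> 0" unfolding M_def by (rule pos[OF T_vecs])
  have t0: "t > 0" unfolding t_def using N0 M0 by simp
  have "t * M = N * (M / (M + 1))" unfolding t_def by simp
  also have "\<dots> < N * 1" using N0 M0 by (intro mult_strict_left_mono) auto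
  finally have tM: "t * M < N" by simp
  have qgf: "?q ?g f = of_real N" unfolding N_def by (simp add: inner_sp_self)
  have qfg: "?q f ?g = of_real N"
    using hermitian_if_real_quadratic_form[OF add scale real f T_vecs] qgf by simp
  define h where "h = f + vscale (- of_real t) ?g"
  have h: "h \<in> vecs D a b" unfolding h_def using f T_vecs by (intro vecs_add vecs_scale)
  have "?q h h = inner_sp D a b (f + vscale (- of_real t) ?g) (T f + vscale (- of_real t) (T ?g))"
    unfolding h_def by (simp only: add scale)
  also have "\<dots> = ?q f f + cnj (- of_real t) * ?q ?g f + (- of_real t) * (?q f ?g + cnj (- of_real t) * ?q ?g ?g)"
    by (simp only: inner_sp_add_left inner_sp_add_right inner_sp_scale_left inner_sp_scale_right)
  finally have "Re (?q h h) = Re (?q f f + cnj (- of_real t) * ?q ?g f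
      + (- of_real t) * (?q f ?g + cnj (- of_real t) * ?q ?g ?g))"
    by simp
  also have "\<dots> = t * (t * M - 2 * N)"
    unfolding z qgf qfg M_def by (simp add: algebra_simps)
  also have "\<dots> < 0" using t0 tM N0 by (intro mult_pos_neg) auto
  finally show False using pos[OF h] by simp
qed

lemma Ham_hermitian:
  assumes pos: "positive_int D hm" and ac: "a \<le> c" and eb: "e \<le> b"
    and f: "f \<in> vecs D a b" and g: "g \<in> vecs D a b"
  shows "inner_sp D a b f (Ham D hm a b c e g) = inner_sp D a b (Ham D hm a b c e f) g"
proof -
  have "inner_sp D a b f (Ham D hm a b c e g) = cnj (inner_sp D a b g (Ham D hm a b c e f))"
    by (rule hermitian_if_real_quadratic_form[OF Ham_add Ham_scale _ f g])
      (use inner_sp_Ham_nonneg[OF pos ac eb] in blast)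
  then show ?thesis by (simp add: cnj_inner_sp)
qed

lemma Ham_eq_0_if_energy_eq_0:
  assumes pos: "positive_int D hm" and ac: "a \<le> c" and eb: "e \<le> b"
    and f: "f \<in> vecs D a b" and z: "inner_sp D a b f (Ham D hm a b c e f) = 0"
  shows "Ham D hm a b c e f = 0"
  by (rule positive_op_kernel[OF Ham_add Ham_scale _ _ Ham_in_vecs f z])
    (use inner_sp_Ham_nonneg[OF pos ac eb] in blast)+

lemma sum4_swap:
  "(\<Sum>k<D. \<Sum>l<D. \<Sum>k'<D. \<Sum>l'<D. F k l k' l') = (\<Sum>k'<D. \<Sum>l'<D. \<Sum>k<D. \<Sum>l<D. F k l k' l')"
proof -
  have "(\<Sum>k<D. \<Sum>l<D. \<Sum>k'<D. \<Sum>l'<D. F k l k' l') = (\<Sum>k<D. \<Sum>k'<D. \<Sum>l<D. \<Sum>l'<D. F k l k' l')"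
    by (rule sum.cong[OF refl], rule sum.swap)
  also have "\<dots> = (\<Sum>k'<D. \<Sum>k<D. \<Sum>l<D. \<Sum>l'<D. F k l k' l')"
    by (rule sum.swap)
  also have "\<dots> = (\<Sum>k'<D. \<Sum>k<D. \<Sum>l'<D. \<Sum>l<D. F k l k' l')"
    by (rule sum.cong[OF refl], rule sum.cong[OF refl], rule sum.swap)
  also have "\<dots> = (\<Sum>k'<D. \<Sum>l'<D. \<Sum>k<D. \<Sum>l<D. F k l k' l')"
    by (rule sum.cong[OF refl], rule sum.swap)
  finally show ?thesis .
qed

lemma bond_commute:
  assumes ax: "a \<le> x" and xy: "x + 2 \<le> y" and yb: "y + 1 \<le> b"
  shows "bond D hm a b x (bond D hm a b y f) = bond D hm a b y (bond D hm a b x f)"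
proof
  fix \<sigma> :: cfg
  show "bond D hm a b x (bond D hm a b y f) \<sigma> = bond D hm a b y (bond D hm a b x f) \<sigma>"
  proof (cases "\<sigma> \<in> cfgs D a b")
    case False
    then show ?thesis by (simp add: bond_def)
  next
    case True
    have upd: "\<sigma>(x := k, x + 1 := l) \<in> cfgs D a b" "\<sigma>(y := k, y + 1 := l) \<in> cfgs D a b"
      if "k < D" "l < D" for k l
      using upd_in_cfgs[OF True] ax xy yb that by simp_all
    have disjoint: "(\<sigma>(x := k, x + 1 := l)) y = \<sigma> y" "(\<sigma>(x := k, x + 1 := l)) (y + 1) = \<sigma> (y + 1)"
      "(\<sigma>(y := k, y + 1 := l)) x = \<sigma> x" "(\<sigma>(y := k, y + 1 := l)) (x + 1) = \<sigma> (x + 1)"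
      "\<sigma>(x := k, x + 1 := l, y := k', y + 1 := l') = \<sigma>(y := k', y + 1 := l', x := k, x + 1 := l)"
      for k l k' l'
      using xy by (auto simp: fun_eq_iff)
    have "bond D hm a b x (bond D hm a b y f) \<sigma> =
       (\<Sum>k<D. \<Sum>l<D. \<Sum>k'<D. \<Sum>l'<D. hm (\<sigma> x) (\<sigma> (x + 1)) k l * (hm (\<sigma> y) (\<sigma> (y + 1)) k' l' *
           f (\<sigma>(x := k, x + 1 := l, y := k', y + 1 := l'))))"
      using True upd(1) disjoint(1,2) by (simp add: bond_def sum_distrib_left)
    also have "\<dots> = (\<Sum>k'<D. \<Sum>l'<D. \<Sum>k<D. \<Sum>l<D. hm (\<sigma> x) (\<sigma> (x + 1)) k l *
           (hm (\<sigma> y) (\<sigma> (y + 1)) k' l' * f (\<sigma>(x := k, x + 1 := l, y := k', y + 1 := l'))))"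
      by (rule sum4_swap)
    also have "\<dots> = bond D hm a b y (bond D hm a b x f) \<sigma>"
      using True upd(2) disjoint(3-5) by (simp add: bond_def sum_distrib_left mult.left_commute)
    finally show ?thesis .
  qed
qed

lemma Ham_commute:
  assumes "a \<le> p1" "q1 + 1 \<le> p2" "q2 \<le> b"
  shows "Ham D hm a b p1 q1 (Ham D hm a b p2 q2 f) = Ham D hm a b p2 q2 (Ham D hm a b p1 q1 f)"
proof -
  have "Ham D hm a b p1 q1 (Ham D hm a b p2 q2 f)
      = (\<lambda>\<sigma>. \<Sum>x\<in>{p1..<q1}. \<Sum>y\<in>{p2..<q2}. bond D hm a b x (bond D hm a b y f) \<sigma>)"
    unfolding Ham_def bond_sum ..
  also have "\<dots> = (\<lambda>\<sigma>. \<Sum>x\<in>{p1..<q1}. \<Sum>y\<in>{p2..<q2}. bond D hm a b y (bond D hm a b x f) \<sigma>)"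
  proof (intro ext sum.cong refl)
    fix \<sigma> x y assume "x \<in> {p1..<q1}" "y \<in> {p2..<q2}"
    then have "bond D hm a b x (bond D hm a b y f) = bond D hm a b y (bond D hm a b x f)"
      by (intro bond_commute) (use assms in auto)
    then show "bond D hm a b x (bond D hm a b y f) \<sigma> = bond D hm a b y (bond D hm a b x f) \<sigma>"
      by simp
  qed
  also have "\<dots> = Ham D hm a b p2 q2 (Ham D hm a b p1 q1 f)"
    unfolding Ham_def bond_sum by (rule ext, rule sum.swap)
  finally show ?thesis .
qed

section \<open>Ground state projections\<close>

lemma mem_gs_iff: "f \<in> gs D hm a b c e \<longleftrightarrow> f \<in> vecs D a b \<and> Ham D hm a b c e f = 0"
  by (simp add: gs_def zero_fun_def)

lemma is_subspace_gs: "is_subspace D a b (gs D hm a b c e)"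
  unfolding is_subspace_def by (auto simp: mem_gs_iff vecs_add vecs_scale Ham_add Ham_scale Ham_zero)

lemma Gp_in_gs: "Gp D hm a b c e f \<in> gs D hm a b c e"
  unfolding Gp_def by (rule proj_in[OF is_subspace_gs])

lemma Gp_in_vecs: "Gp D hm a b c e f \<in> vecs D a b"
  unfolding Gp_def by (rule proj_in_vecs[OF is_subspace_gs])

lemma gs_subset_gs:
  assumes pos: "positive_int D hm" and ac: "a \<le> c" and eb: "e \<le> b"
    and cc: "c \<le> c'" and ee: "e' \<le> e"
  shows "gs D hm a b c e \<subseteq> gs D hm a b c' e'"
proof
  fix f assume "f \<in> gs D hm a b c e"
  then have f: "f \<in> vecs D a b" and H0: "Ham D hm a b c e f = 0" unfolding mem_gs_iff by auto
  show "f \<in> gs D hm a b c' e'"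
  proof (cases "c' < e'")
    case False
    then show ?thesis using f Ham_empty[of e' c'] unfolding mem_gs_iff by auto
  next
    case True
    let ?A = "inner_sp D a b f (Ham D hm a b c c' f)"
    let ?B = "inner_sp D a b f (Ham D hm a b c' e' f)"
    let ?C = "inner_sp D a b f (Ham D hm a b e' e f)"
    have "Ham D hm a b c e f = Ham D hm a b c c' f + Ham D hm a b c' e' f + Ham D hm a b e' e f"
      using Ham_split[of c c' e] Ham_split[of c' e' e] cc ee True by simp
    then have "?A + ?B + ?C = 0" using H0 by (simp add: inner_sp_add_right[symmetric])
    then have "Re ?A + Re ?B + Re ?C = 0" by (metis plus_complex.sel(1) zero_complex.sel(1))
    moreover have "Re ?A \<ge> 0" "Re ?C \<ge> 0" "Re ?B \<ge> 0" "Im ?B = 0"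
      using inner_sp_Ham_nonneg[OF pos, of a _ _ b f] ac eb cc ee True by auto
    ultimately have "?B = 0" by (simp add: complex_eqI)
    then have "Ham D hm a b c' e' f = 0"
      using Ham_eq_0_if_energy_eq_0[OF pos _ _ f] ac eb cc ee True by simp
    then show ?thesis using f unfolding mem_gs_iff by auto
  qed
qed

lemma slice_in_gs:
  assumes "a \<le> c" "e \<le> b" "c \<le> c0" "e0 \<le> e" "\<rho> \<in> outer_cfgs D a b c e"
    and "f \<in> gs D hm a b c0 e0"
  shows "slice D c e f \<rho> \<in> gs D hm c e c0 e0"
  using assms slice_Ham[OF assms(1-5), of hm f] slice_zero slice_in_vecs by (auto simp: mem_gs_iff)

lemma unslice_in_gs:
  assumes ac: "a \<le> c" and eb: "e \<le> b" and x: "c \<le> c0" "e0 \<le> e"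
    and F: "\<And>\<rho>. \<rho> \<in> outer_cfgs D a b c e \<Longrightarrow> F \<rho> \<in> gs D hm c e c0 e0"
  shows "unslice D a b c e F \<in> gs D hm a b c0 e0"
proof -
  let ?g = "unslice D a b c e F"
  have "Ham D hm a b c0 e0 ?g \<tau> = 0" for \<tau>
  proof (cases "\<tau> \<in> cfgs D a b")
    case False
    then show ?thesis using Ham_in_vecs[of D hm a b c0 e0 ?g] by (simp add: vecs_def)
  next
    case True
    let ?\<rho> = "erase_on c e \<tau>"
    have \<rho>: "?\<rho> \<in> outer_cfgs D a b c e" by (rule erase_on_in_outer_cfgs[OF True])
    have "Ham D hm a b c0 e0 ?g \<tau> = Ham D hm c e c0 e0 (slice D c e ?g ?\<rho>) (restrict_to c e \<tau>)"
      using apply_eq_slice[OF ac eb True] slice_Ham[OF ac eb x \<rho>] by metis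
    also have "\<dots> = 0"
      using slice_unslice[OF ac eb \<rho>] F[OF \<rho>] by (simp add: mem_gs_iff)
    finally show ?thesis .
  qed
  then show ?thesis using unslice_in_vecs by (auto simp: mem_gs_iff zero_fun_def)
qed

lemma slice_Gp:
  assumes ac: "a \<le> c" and eb: "e \<le> b" and x: "c \<le> c0" "e0 \<le> e"
    and \<rho>: "\<rho> \<in> outer_cfgs D a b c e"
  shows "slice D c e (Gp D hm a b c0 e0 f) \<rho> = Gp D hm c e c0 e0 (slice D c e f \<rho>)"
proof -
  let ?F = "\<lambda>\<rho>. Gp D hm c e c0 e0 (slice D c e f \<rho>)"
  have F: "?F \<rho>' \<in> vecs D c e" for \<rho>'
    by (rule Gp_in_vecs)
  have "Gp D hm a b c0 e0 f = unslice D a b c e ?F"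
    unfolding Gp_def[of D hm a b]
  proof (rule proj_eqI[OF is_subspace_gs])
    show "unslice D a b c e ?F \<in> gs D hm a b c0 e0"
      by (rule unslice_in_gs[OF ac eb x Gp_in_gs])
  next
    fix u assume u: "u \<in> gs D hm a b c0 e0"
    have "inner_sp D a b u (f - unslice D a b c e ?F)
        = (\<Sum>\<rho>'\<in>outer_cfgs D a b c e. inner_sp D c e (slice D c e u \<rho>') (slice D c e f \<rho>' - ?F \<rho>'))"
      unfolding inner_sp_slice[OF ac eb, of D u] slice_diff
      using slice_unslice[where F = ?F, OF ac eb _ F] by (intro sum.cong refl) simp
    also have "\<dots> = 0"
      using proj_orth[OF is_subspace_gs slice_in_gs[OF ac eb x _ u]] unfolding Gp_def
      by (intro sum.neutral) blast
    finally show "inner_sp D a b u (f - unslice D a b c e ?F) = 0" .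
  qed
  then show ?thesis using slice_unslice[where F = ?F, OF ac eb \<rho> F] by simp
qed

lemma shift_vec_in_gs:
  assumes f: "f \<in> gs D hm a b c e" and shift: "a' = a + t" "b' = b + t" "c' = c + t" "e' = e + t"
  shows "shift_vec t f \<in> gs D hm a' b' c' e'"
proof -
  have "Ham D hm a' b' c' e' (shift_vec t f) = shift_vec t (Ham D hm a b c e f)"
    by (rule Ham_shift_vec[OF shift])
  then show ?thesis
    using f shift_vec_in_vecs[of f D a b a' t b'] shift shift_vec_zero by (simp add: mem_gs_iff)
qed

lemma Gp_shift_vec:
  assumes shift: "a' = a + t" "b' = b + t" "c' = c + t" "e' = e + t"
  shows "Gp D hm a' b' c' e' (shift_vec t f) = shift_vec t (Gp D hm a b c e f)"
proof -
  let ?P = "proj D a b (gs D hm a b c e)"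
  have "proj D a' b' (gs D hm a' b' c' e') (shift_vec t f) = shift_vec t (?P f)"
  proof (rule proj_eqI[OF is_subspace_gs])
    show "shift_vec t (?P f) \<in> gs D hm a' b' c' e'"
      by (rule shift_vec_in_gs[OF proj_in[OF is_subspace_gs] shift])
  next
    fix u assume u: "u \<in> gs D hm a' b' c' e'"
    have u': "shift_vec (-t) u \<in> gs D hm a b c e"
      by (rule shift_vec_in_gs[OF u]) (use shift in simp_all)
    have "inner_sp D a' b' u (shift_vec t f - shift_vec t (?P f))
        = inner_sp D a' b' (shift_vec t (shift_vec (-t) u)) (shift_vec t (f - ?P f))"
      by (simp add: shift_vec_shift_vec shift_vec_diff)
    also have "\<dots> = inner_sp D a b (shift_vec (-t) u) (f - ?P f)"
      by (rule inner_sp_shift_vec[OF shift(1,2)])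
    also have "\<dots> = 0"
      by (rule proj_orth[OF is_subspace_gs u'])
    finally show "inner_sp D a' b' u (shift_vec t f - shift_vec t (?P f)) = 0" .
  qed
  then show ?thesis unfolding Gp_def .
qed

lemma Gp_commute_with_op:
  fixes A :: "vec \<Rightarrow> vec"
  assumes A_diff: "\<And>f g. A (f - g) = A f - A g"
    and A_vecs: "\<And>f. f \<in> vecs D a b \<Longrightarrow> A f \<in> vecs D a b"
    and A_hermitian: "\<And>f g. f \<in> vecs D a b \<Longrightarrow> g \<in> vecs D a b \<Longrightarrow>
      inner_sp D a b f (A g) = inner_sp D a b (A f) g"
    and A_Ham: "\<And>f. f \<in> vecs D a b \<Longrightarrow> A (Ham D hm a b c e f) = Ham D hm a b c e (A f)"
    and f: "f \<in> vecs D a b"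
  shows "Gp D hm a b c e (A f) = A (Gp D hm a b c e f)"
proof -
  let ?S = "gs D hm a b c e"
  let ?P = "proj D a b ?S"
  have A_gs: "A u \<in> ?S" if u: "u \<in> ?S" for u
  proof -
    have u: "u \<in> vecs D a b" "Ham D hm a b c e u = 0" using u by (auto simp: mem_gs_iff)
    have "Ham D hm a b c e (A u) = A 0" using A_Ham[OF u(1)] u(2) by simp
    also have "\<dots> = 0" using A_diff[of 0 0] by simp
    finally show ?thesis using A_vecs[OF u(1)] by (simp add: mem_gs_iff)
  qed
  have "?P (A f) = A (?P f)"
  proof (rule proj_eqI[OF is_subspace_gs])
    show "A (?P f) \<in> ?S" by (rule A_gs[OF proj_in[OF is_subspace_gs]])
  next
    fix u assume u: "u \<in> ?S"
    then have "u \<in> vecs D a b" by (simp add: mem_gs_iff)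
    then have "inner_sp D a b u (A f - A (?P f)) = inner_sp D a b (A u) (f - ?P f)"
      using A_hermitian vecs_diff[OF f proj_in_vecs[OF is_subspace_gs]] A_diff by metis
    also have "\<dots> = 0" by (rule proj_orth[OF is_subspace_gs A_gs[OF u]])
    finally show "inner_sp D a b u (A f - A (?P f)) = 0" .
  qed
  then show ?thesis unfolding Gp_def .
qed

text \<open>\<open>G(p2,q2)\<close> commutes with \<open>H(p1,q1)\<close>, hence with its kernel projection \<open>G(p1,q1)\<close>.\<close>

lemma Gp_commute:
  assumes pos: "positive_int D hm" and ap: "a \<le> p1" and qp: "q1 + 1 \<le> p2" and qb: "q2 \<le> b"
    and pq: "p2 \<le> q2" and f: "f \<in> vecs D a b"
  shows "Gp D hm a b p1 q1 (Gp D hm a b p2 q2 f) = Gp D hm a b p2 q2 (Gp D hm a b p1 q1 f)"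
proof (rule Gp_commute_with_op[OF _ Gp_in_vecs _ _ f])
  show "Gp D hm a b p2 q2 (f - g) = Gp D hm a b p2 q2 f - Gp D hm a b p2 q2 g" for f g
    unfolding Gp_def by (rule proj_diff[OF is_subspace_gs])
  show "inner_sp D a b f (Gp D hm a b p2 q2 g) = inner_sp D a b (Gp D hm a b p2 q2 f) g" for f g
    unfolding Gp_def by (rule proj_self_adjoint[OF is_subspace_gs, symmetric])
  show "Gp D hm a b p2 q2 (Ham D hm a b p1 q1 g) = Ham D hm a b p1 q1 (Gp D hm a b p2 q2 g)"
    if g: "g \<in> vecs D a b" for g
  proof (rule Gp_commute_with_op[OF Ham_diff Ham_in_vecs _ _ g])
    show "inner_sp D a b f (Ham D hm a b p1 q1 g) = inner_sp D a b (Ham D hm a b p1 q1 f) g"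
      if "f \<in> vecs D a b" "g \<in> vecs D a b" for f g
      using that pq qp qb by (intro Ham_hermitian[OF pos ap]) simp_all
    show "Ham D hm a b p1 q1 (Ham D hm a b p2 q2 f) = Ham D hm a b p2 q2 (Ham D hm a b p1 q1 f)" for f
      by (rule Ham_commute[OF ap qp qb])
  qed
qed

section \<open>Gap and overlap bounds\<close>

definition has_gap :: "nat \<Rightarrow> (nat \<Rightarrow> nat \<Rightarrow> nat \<Rightarrow> nat \<Rightarrow> complex) \<Rightarrow> real \<Rightarrow> int \<Rightarrow> int \<Rightarrow> int \<Rightarrow> int \<Rightarrow> bool"
  where "has_gap D hm \<gamma> a b c e \<longleftrightarrow> (\<forall>f\<in>vecs D a b.
    \<gamma> * sqnorm D a b (f - Gp D hm a b c e f) \<le> Re (inner_sp D a b f (Ham D hm a b c e f)))"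

lemma has_gap_mono: "has_gap D hm \<gamma> a b c e \<Longrightarrow> \<gamma>' \<le> \<gamma> \<Longrightarrow> has_gap D hm \<gamma>' a b c e"
  unfolding has_gap_def by (meson mult_right_mono order_trans sqnorm_nonneg)

lemma has_gap_gap:
  assumes pos: "positive_int D hm"
  shows "has_gap D hm (gap D hm c e) c e c e"
  unfolding has_gap_def
proof
  fix f assume f: "f \<in> vecs D c e"
  define A where "A = (\<lambda>f. Re (inner_sp D c e f (\<lambda>\<sigma>. f \<sigma> - Gp D hm c e c e f \<sigma>)))"
  define B where "B = (\<lambda>f. Re (inner_sp D c e f (Ham D hm c e c e f)))"
  have A: "A g = sqnorm D c e (g - Gp D hm c e c e g)" for g
  proof -
    have "(\<lambda>\<sigma>. g \<sigma> - Gp D hm c e c e g \<sigma>) = g - Gp D hm c e c e g" by (rule ext) simp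
    then show ?thesis
      using inner_sp_proj_complement[OF is_subspace_gs[of D c e hm c e], of g]
      unfolding A_def Gp_def by simp
  qed
  have B: "B g \<ge> 0" for g
    unfolding B_def using inner_sp_Ham_nonneg[OF pos order_refl order_refl] by blast
  have gap_eq: "gap D hm c e = Sup {g. \<forall>f\<in>vecs D c e. g * A f \<le> B f}"
    unfolding gap_def A_def B_def ..
  show "gap D hm c e * sqnorm D c e (f - Gp D hm c e c e f) \<le> Re (inner_sp D c e f (Ham D hm c e c e f))"
  proof (cases "A f = 0")
    case True
    then show ?thesis using B[of f] unfolding A B_def by simp
  next
    case False
    then have Af: "A f > 0" using sqnorm_nonneg unfolding A by (metis less_eq_real_def)
    have "gap D hm c e \<le> B f / A f"
      unfolding gap_eq
    proof (rule cSup_least)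
      have "0 \<in> {g. \<forall>f\<in>vecs D c e. g * A f \<le> B f}" using B by simp
      then show "{g. \<forall>f\<in>vecs D c e. g * A f \<le> B f} \<noteq> {}" by blast
      show "g \<le> B f / A f" if "g \<in> {g. \<forall>f\<in>vecs D c e. g * A f \<le> B f}" for g
        using that f Af by (auto simp: pos_le_divide_eq)
    qed
    then show ?thesis using Af unfolding A B_def by (simp add: pos_le_divide_eq)
  qed
qed

lemma has_gap_slice:
  assumes ac: "a \<le> c" and eb: "e \<le> b" and gap: "has_gap D hm \<gamma> c e c e"
  shows "has_gap D hm \<gamma> a b c e"
  unfolding has_gap_def
proof
  fix f
  have "\<gamma> * sqnorm D a b (f - Gp D hm a b c e f)
      = (\<Sum>\<rho>\<in>outer_cfgs D a b c e. \<gamma> * sqnorm D c e (slice D c e f \<rho> - Gp D hm c e c e (slice D c e f \<rho>)))"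
    unfolding sqnorm_slice[OF ac eb, of D] sum_distrib_left
    by (intro sum.cong refl) (simp add: slice_diff slice_Gp[OF ac eb order_refl order_refl])
  also have "\<dots> \<le> (\<Sum>\<rho>\<in>outer_cfgs D a b c e.
      Re (inner_sp D c e (slice D c e f \<rho>) (Ham D hm c e c e (slice D c e f \<rho>))))"
    using gap slice_in_vecs unfolding has_gap_def by (intro sum_mono) blast
  also have "\<dots> = Re (inner_sp D a b f (Ham D hm a b c e f))"
    unfolding inner_sp_slice[OF ac eb, of D f] Re_sum
    by (intro sum.cong refl) (simp add: slice_Ham[OF ac eb order_refl order_refl])
  finally show "\<gamma> * sqnorm D a b (f - Gp D hm a b c e f) \<le> Re (inner_sp D a b f (Ham D hm a b c e f))" .
qed

lemma has_gap_shift: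
  assumes gap: "has_gap D hm \<gamma> c e c e" and shift: "c' = c + t" "e' = e + t"
  shows "has_gap D hm \<gamma> c' e' c' e'"
  unfolding has_gap_def
proof
  fix h assume h: "h \<in> vecs D c' e'"
  define h' where "h' = shift_vec (-t) h"
  have h': "h' \<in> vecs D c e"
    unfolding h'_def by (rule shift_vec_in_vecs[OF h]) (simp_all add: shift)
  have h_eq: "h = shift_vec t h'"
    unfolding h'_def by (simp add: shift_vec_shift_vec)
  have "sqnorm D c' e' (h - Gp D hm c' e' c' e' h) = sqnorm D c e (h' - Gp D hm c e c e h')"
    unfolding h_eq Gp_shift_vec[OF shift shift] shift_vec_diff[symmetric]
    by (rule sqnorm_shift_vec[OF shift])
  moreover have "inner_sp D c' e' h (Ham D hm c' e' c' e' h) = inner_sp D c e h' (Ham D hm c e c e h')"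
    unfolding h_eq Ham_shift_vec[OF shift shift] by (rule inner_sp_shift_vec[OF shift])
  ultimately show "\<gamma> * sqnorm D c' e' (h - Gp D hm c' e' c' e' h) \<le> Re (inner_sp D c' e' h (Ham D hm c' e' c' e' h))"
    using gap h' unfolding has_gap_def by simp
qed

lemma eps_set_bounded:
  assumes "norm_sp D (-m) n \<psi> = 1"
  shows "Re (inner_sp D (-m) n \<psi> (Gp D hm (-m) n 0 n \<psi>)) \<le> 1"
proof -
  have "Re (inner_sp D (-m) n \<psi> (Gp D hm (-m) n 0 n \<psi>)) = sqnorm D (-m) n (Gp D hm (-m) n 0 n \<psi>)"
    unfolding Gp_def inner_sp_proj_self[OF is_subspace_gs] by simp
  also have "\<dots> \<le> sqnorm D (-m) n \<psi>"
    unfolding Gp_def by (rule sqnorm_proj_le[OF is_subspace_gs])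
  also have "\<dots> = 1"
    using assms norm_sp_power2[of D "-m" n \<psi>] by simp
  finally show ?thesis .
qed

lemma bdd_above_eps_set:
  "bdd_above (insert 0 {Re (inner_sp D (-m) n \<psi> (Gp D hm (-m) n 0 n \<psi>)) | \<psi>.
     \<psi> \<in> gs D hm (-m) n (-m) 0 \<and> (\<forall>u\<in>gs D hm (-m) n (-m) n. inner_sp D (-m) n u \<psi> = 0) \<and>
     norm_sp D (-m) n \<psi> = 1})"
  unfolding bdd_above_def by (auto intro!: exI[of _ 1] eps_set_bounded)

lemma eps_nonneg: "eps D hm m n \<ge> 0"
  unfolding eps_def by (rule cSup_upper[OF _ bdd_above_eps_set]) simp

lemma eps_le_eps_mn: "m \<le> m' \<Longrightarrow> eps D hm m' n \<le> eps_mn D hm m n"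
proof -
  have "eps D hm m'' n \<le> 1" for m''
    unfolding eps_def by (rule cSup_least) (auto intro: eps_set_bounded)
  then show "m \<le> m' \<Longrightarrow> eps D hm m' n \<le> eps_mn D hm m n"
    unfolding eps_mn_def by (intro cSup_upper) (auto simp: bdd_above_def)
qed

lemma sqnorm_Gp_le_eps:
  assumes \<psi>: "\<psi> \<in> gs D hm (-m) n (-m) 0" and orth: "Gp D hm (-m) n (-m) n \<psi> = 0"
  shows "sqnorm D (-m) n (Gp D hm (-m) n 0 n \<psi>) \<le> eps D hm m n * sqnorm D (-m) n \<psi>"
proof (cases "sqnorm D (-m) n \<psi> = 0")
  case True
  then show ?thesis
    using sqnorm_proj_le[OF is_subspace_gs, of D "-m" n hm 0 n \<psi>] sqnorm_nonneg unfolding Gp_def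
    by (metis antisym mult_zero_right)
next
  case False
  define r where "r = sqnorm D (-m) n \<psi>"
  have r: "r > 0" using False sqnorm_nonneg[of D "-m" n \<psi>] unfolding r_def by linarith
  define k where "k = complex_of_real (1 / sqrt r)"
  have scaled: "inner_sp D (-m) n (vscale k g) (vscale k h) = inner_sp D (-m) n g h / of_real r" for g h
    using inner_sp_normalized[of D "-m" n \<psi>] r unfolding k_def r_def by simp
  let ?\<psi>' = "vscale k \<psi>"
  have "?\<psi>' \<in> gs D hm (-m) n (-m) 0"
    by (rule is_subspace_scale[OF is_subspace_gs \<psi>])
  moreover have "\<forall>u\<in>gs D hm (-m) n (-m) n. inner_sp D (-m) n u ?\<psi>' = 0"
    using orth unfolding Gp_def proj_eq_0_iff[OF is_subspace_gs] by (simp add: inner_sp_scale_right)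
  moreover have "norm_sp D (-m) n ?\<psi>' = 1"
    using r unfolding norm_sp_def scaled unfolding inner_sp_self r_def[symmetric] by simp
  ultimately have "Re (inner_sp D (-m) n ?\<psi>' (Gp D hm (-m) n 0 n ?\<psi>')) \<le> eps D hm m n"
    unfolding eps_def by (intro cSup_upper[OF _ bdd_above_eps_set]) blast
  moreover have "inner_sp D (-m) n ?\<psi>' (Gp D hm (-m) n 0 n ?\<psi>')
      = of_real (sqnorm D (-m) n (Gp D hm (-m) n 0 n \<psi>)) / of_real r"
    unfolding Gp_def proj_scale[OF is_subspace_gs] scaled inner_sp_proj_self[OF is_subspace_gs] ..
  ultimately show ?thesis
    using r by (simp add: r_def[symmetric] divide_le_eq mult.commute)
qed

lemma sqnorm_Gp_le_eps_chain:
  assumes \<psi>: "\<psi> \<in> gs D hm 1 N 1 (N - n)" and orth: "Gp D hm 1 N 1 N \<psi> = 0"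
  shows "sqnorm D 1 N (Gp D hm 1 N (N - n) N \<psi>) \<le> eps D hm (N - n - 1) n * sqnorm D 1 N \<psi>"
proof -
  define t where "t = n - N"
  have shift: "- (N - n - 1) = 1 + t" "n = N + t" "0 = N - n + t" unfolding t_def by simp_all
  let ?\<psi>' = "shift_vec t \<psi>"
  have "sqnorm D (- (N - n - 1)) n (Gp D hm (- (N - n - 1)) n 0 n ?\<psi>')
      \<le> eps D hm (N - n - 1) n * sqnorm D (- (N - n - 1)) n ?\<psi>'"
  proof (rule sqnorm_Gp_le_eps)
    show "?\<psi>' \<in> gs D hm (- (N - n - 1)) n (- (N - n - 1)) 0"
      by (rule shift_vec_in_gs[OF \<psi> shift(1,2,1,3)])
    show "Gp D hm (- (N - n - 1)) n (- (N - n - 1)) n ?\<psi>' = 0"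
      unfolding Gp_shift_vec[OF shift(1,2,1,2)] orth shift_vec_zero ..
  qed
  then show ?thesis
    unfolding Gp_shift_vec[OF shift(1,2,3,2)] sqnorm_shift_vec[OF shift(1,2)] .
qed

lemma sqnorm_Gp_le_eps_slice:
  assumes "1 \<le> N - n" "0 \<le> n" "N \<le> b"
    and \<phi>: "\<phi> \<in> gs D hm 1 b 1 (N - n)" and orth: "Gp D hm 1 b 1 N \<phi> = 0"
  shows "sqnorm D 1 b (Gp D hm 1 b (N - n) N \<phi>) \<le> eps D hm (N - n - 1) n * sqnorm D 1 b \<phi>"
proof -
  have window: "(1::int) \<le> 1" "N \<le> b" "N - n \<le> N" using assms by simp_all
  have "sqnorm D 1 b (Gp D hm 1 b (N - n) N \<phi>)
      = (\<Sum>\<rho>\<in>outer_cfgs D 1 b 1 N. sqnorm D 1 N (Gp D hm 1 N (N - n) N (slice D 1 N \<phi> \<rho>)))"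
    unfolding sqnorm_slice[OF window(1,2)]
    by (intro sum.cong refl) (simp add: slice_Gp[OF window(1,2) assms(1) order_refl])
  also have "\<dots> \<le> (\<Sum>\<rho>\<in>outer_cfgs D 1 b 1 N. eps D hm (N - n - 1) n * sqnorm D 1 N (slice D 1 N \<phi> \<rho>))"
  proof (rule sum_mono, rule sqnorm_Gp_le_eps_chain)
    fix \<rho> assume \<rho>: "\<rho> \<in> outer_cfgs D 1 b 1 N"
    show "slice D 1 N \<phi> \<rho> \<in> gs D hm 1 N 1 (N - n)"
      by (rule slice_in_gs[OF window(1,2,1,3) \<rho> \<phi>])
    show "Gp D hm 1 N 1 N (slice D 1 N \<phi> \<rho>) = 0"
      using slice_Gp[OF window(1,2,1) order_refl \<rho>, of hm \<phi>] orth slice_zero by simp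
  qed
  also have "\<dots> = eps D hm (N - n - 1) n * sqnorm D 1 b \<phi>"
    unfolding sqnorm_slice[OF window(1,2), of D \<phi>] sum_distrib_left ..
  finally show ?thesis .
qed

section \<open>The two-dimensional estimate\<close>

lemma overlap_quadratic_bound:
  fixes c r u \<xi> \<omega> :: real
  assumes "c \<ge> 0" "r \<ge> 0" "u \<ge> 0" "\<xi> \<ge> 0" "\<omega> \<ge> 0" "\<omega> \<ge> u - \<xi> * r"
  shows "c * u\<^sup>2 \<le> (c + r\<^sup>2) * (\<omega>\<^sup>2 + c * \<xi>\<^sup>2)"
proof (cases "u - \<xi> * r \<ge> 0")
  case True
  then have "(u - \<xi> * r)\<^sup>2 \<le> \<omega>\<^sup>2" using assms by (simp add: power_mono)
  moreover have "(c + r\<^sup>2) * ((u - \<xi> * r)\<^sup>2 + c * \<xi>\<^sup>2) = (r * u - (c + r\<^sup>2) * \<xi>)\<^sup>2 + c * u\<^sup>2"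
    by (simp add: power2_eq_square algebra_simps)
  ultimately show ?thesis
    using assms by (smt (verit) mult_left_mono zero_le_power2)
next
  case False
  then have "u\<^sup>2 \<le> (\<xi> * r)\<^sup>2" using assms by (simp add: power_mono)
  also have "\<dots> \<le> (c + r\<^sup>2) * \<xi>\<^sup>2" using assms by (simp add: power_mult_distrib algebra_simps)
  finally have "c * u\<^sup>2 \<le> (c + r\<^sup>2) * (c * \<xi>\<^sup>2)"
    using assms by (metis mult.left_commute mult_left_mono)
  then show ?thesis
    using assms by (smt (verit) mult_nonneg_nonneg zero_le_power2 distrib_left)
qed

text \<open>Here \<open>t\<^sup>2 = \<epsilon>\<close>, \<open>s\<^sup>2 = 1 - \<epsilon>\<close>; relative to \<open>\<parallel>\<phi>\<^sub>2\<parallel>\<close>, \<open>r\<close> and \<open>u\<close> are the lengths of the parts of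
  \<open>\<phi>\<^sub>2\<close> inside and outside a subspace, \<open>\<xi>\<close> is the length of a vector \<open>\<phi>\<^sub>1 \<perp> \<phi>\<^sub>2\<close> and \<open>\<omega>\<close>
  that of the part of \<open>\<phi>\<^sub>1 + \<phi>\<^sub>2\<close> outside the subspace.\<close>

lemma overlap_angle_bound:
  fixes s t r u \<xi> \<omega> :: real
  assumes st: "s\<^sup>2 + t\<^sup>2 = 1" "s \<ge> 0" "t \<ge> 0" "t < s"
    and ru: "r\<^sup>2 + u\<^sup>2 = 1" "r \<ge> 0" "u \<ge> 0" "r\<^sup>2 \<le> t\<^sup>2"
    and \<xi>\<omega>: "\<xi> \<ge> 0" "\<omega> \<ge> 0" "\<omega> \<ge> u - \<xi> * r"
  shows "s * (s - t) \<le> \<omega>\<^sup>2 + t * (s - t) * \<xi>\<^sup>2"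
proof -
  define c where "c = t * (s - t)"
  define \<beta> where "\<beta> = s * (s - t)"
  have c: "c \<ge> 0" unfolding c_def using st by simp
  have "c * u\<^sup>2 - \<beta> * (c + r\<^sup>2) = c * (1 - \<beta>) - r\<^sup>2 * (c + \<beta>)"
    using ru(1) by (simp add: algebra_simps flip: ru(1))
  also have "c * (1 - \<beta>) = t\<^sup>2 * (s\<^sup>2 - t\<^sup>2)"
  proof -
    have \<beta>: "1 - \<beta> = t * (t + s)" unfolding \<beta>_def using st(1) by (simp add: power2_eq_square algebra_simps)
    show ?thesis unfolding \<beta> c_def by (simp add: power2_eq_square algebra_simps)
  qed
  also have "c + \<beta> = s\<^sup>2 - t\<^sup>2" unfolding c_def \<beta>_def by (simp add: power2_eq_square algebra_simps)
  finally have "c * u\<^sup>2 - \<beta> * (c + r\<^sup>2) = (s\<^sup>2 - t\<^sup>2) * (t\<^sup>2 - r\<^sup>2)"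
    by (simp add: algebra_simps)
  moreover have "s\<^sup>2 - t\<^sup>2 > 0" using st by (simp add: power_strict_mono)
  ultimately have key: "\<beta> * (c + r\<^sup>2) \<le> c * u\<^sup>2"
    using ru(4) by (smt (verit) mult_nonneg_nonneg)
  show ?thesis
  proof (cases "c + r\<^sup>2 > 0")
    case True
    have "\<beta> * (c + r\<^sup>2) \<le> (\<omega>\<^sup>2 + c * \<xi>\<^sup>2) * (c + r\<^sup>2)"
      using key overlap_quadratic_bound[OF c ru(2,3) \<xi>\<omega>] by (simp add: mult.commute)
    then show ?thesis using True unfolding c_def \<beta>_def by simp
  next
    case False
    then have "c = 0" "r\<^sup>2 = 0" using c zero_le_power2[of r] by linarith+
    then have "c = 0" "r = 0" by simp_all
    then have "t = 0" "u = 1" using st ru(1,3) unfolding c_def by (simp_all add: power2_eq_1_iff)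
    then have "s = 1" using st(1,2) by (simp add: power2_eq_1_iff)
    have "1 \<le> \<omega>" using \<xi>\<omega>(3) \<open>r = 0\<close> \<open>u = 1\<close> by simp
    then show ?thesis using \<open>t = 0\<close> \<open>s = 1\<close> by (simp add: one_le_power)
  qed
qed

text \<open>A vector orthogonal to \<open>\<phi>\<^sub>2\<close> is orthogonal to \<open>\<mu> \<phi>\<^sub>2\<close>, and \<open>\<mu>\<close> can be chosen to make
  \<open>P \<phi>\<^sub>2 - \<mu> \<phi>\<^sub>2\<close> short.\<close>

lemma inner_sp_proj_orth_bound:
  assumes S: "is_subspace D a b S" and orth: "inner_sp D a b \<phi>1 \<phi>2 = 0"
    and pos: "sqnorm D a b \<phi>2 > 0"
  shows "cmod (inner_sp D a b \<phi>1 (proj D a b S \<phi>2))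
    \<le> sqrt (sqnorm D a b \<phi>1) * sqrt (sqnorm D a b (proj D a b S \<phi>2))
        * sqrt (sqnorm D a b (\<phi>2 - proj D a b S \<phi>2)) / sqrt (sqnorm D a b \<phi>2)"
proof -
  let ?P = "proj D a b S"
  define Y2 where "Y2 = sqnorm D a b \<phi>2"
  define p2 where "p2 = sqnorm D a b (?P \<phi>2)"
  define q2 where "q2 = sqnorm D a b (\<phi>2 - ?P \<phi>2)"
  define \<mu> where "\<mu> = p2 / Y2"
  have Re_P: "Re (inner_sp D a b (?P \<phi>2) \<phi>2) = p2"
    unfolding cnj_inner_sp[of D a b \<phi>2 "?P \<phi>2", symmetric] inner_sp_proj_self[OF S] p2_def by simp
  have "sqnorm D a b (?P \<phi>2 - vscale (of_real \<mu>) \<phi>2) = p2 - 2 * \<mu> * p2 + \<mu>\<^sup>2 * Y2"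
    unfolding sqnorm_diff_scale Re_P p2_def Y2_def ..
  also have "\<dots> = p2 * (Y2 - p2) / Y2"
    using pos unfolding \<mu>_def Y2_def by (simp add: power2_eq_square field_simps)
  also have "\<dots> = p2 * q2 / Y2"
    using sqnorm_proj_pythagoras[OF S, of \<phi>2] unfolding p2_def q2_def Y2_def by simp
  finally have short: "sqnorm D a b (?P \<phi>2 - vscale (of_real \<mu>) \<phi>2) = p2 * q2 / Y2" .
  have "inner_sp D a b \<phi>1 (?P \<phi>2) = inner_sp D a b \<phi>1 (?P \<phi>2 - vscale (of_real \<mu>) \<phi>2)"
    using orth by (simp add: inner_sp_diff_right inner_sp_scale_right)
  also have "cmod \<dots> \<le> sqrt (sqnorm D a b \<phi>1) * sqrt (p2 * q2 / Y2)"
    unfolding short[symmetric] by (rule inner_sp_Cauchy_Schwarz)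
  finally show ?thesis
    unfolding p2_def q2_def Y2_def by (simp add: real_sqrt_mult real_sqrt_divide)
qed

lemma norm_proj_complement_add_ge:
  assumes S: "is_subspace D a b S" and orth: "inner_sp D a b \<phi>1 \<phi>2 = 0"
    and pos: "sqnorm D a b \<phi>2 > 0"
  shows "sqrt (sqnorm D a b (\<phi>2 - proj D a b S \<phi>2))
      - sqrt (sqnorm D a b \<phi>1) * sqrt (sqnorm D a b (proj D a b S \<phi>2)) / sqrt (sqnorm D a b \<phi>2)
    \<le> sqrt (sqnorm D a b ((\<phi>1 + \<phi>2) - proj D a b S (\<phi>1 + \<phi>2)))"
    (is "?q - ?X * ?p / ?Y \<le> ?w")
proof (cases "?q = 0")
  case True
  have "0 \<le> ?X * ?p / ?Y" "0 \<le> ?w" by (simp_all add: sqnorm_nonneg)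
  then show ?thesis using True by linarith
next
  case False
  let ?P = "proj D a b S"
  let ?u = "\<phi>1 + \<phi>2"
  let ?v = "\<phi>2 - ?P \<phi>2"
  have q: "?q > 0" using False sqnorm_nonneg[of D a b ?v] by simp
  have "inner_sp D a b (?u - ?P ?u) ?v = inner_sp D a b ?u ?v"
    using proj_orth[OF S proj_in[OF S], of ?u \<phi>2] by (simp add: inner_sp_diff_left)
  also have "\<dots> = of_real (?q\<^sup>2) - inner_sp D a b \<phi>1 (?P \<phi>2)"
    using inner_sp_proj_complement[OF S, of \<phi>2] orth sqnorm_nonneg[of D a b ?v]
    by (simp add: inner_sp_add_left inner_sp_diff_right)
  finally have "?q\<^sup>2 = Re (inner_sp D a b (?u - ?P ?u) ?v) + Re (inner_sp D a b \<phi>1 (?P \<phi>2))"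
    by simp
  also have "\<dots> \<le> ?w * ?q + ?X * ?p * ?q / ?Y"
    using complex_Re_le_cmod order_trans inner_sp_Cauchy_Schwarz inner_sp_proj_orth_bound[OF S orth pos]
    by (smt (verit))
  finally have "(?q - ?X * ?p / ?Y) * ?q \<le> ?w * ?q"
    by (simp add: power2_eq_square algebra_simps)
  then show ?thesis using q by simp
qed

lemma overlap_angle_bound_scaled:
  fixes s t Y p q X w :: real
  assumes st: "s\<^sup>2 + t\<^sup>2 = 1" "s \<ge> 0" "t \<ge> 0" "t < s"
    and Y: "Y > 0" and pq: "p\<^sup>2 + q\<^sup>2 = Y\<^sup>2" "p \<ge> 0" "q \<ge> 0" "p\<^sup>2 \<le> t\<^sup>2 * Y\<^sup>2"
    and Xw: "X \<ge> 0" "w \<ge> 0" "q - X * p / Y \<le> w"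
  shows "s * (s - t) * Y\<^sup>2 \<le> w\<^sup>2 + t * (s - t) * X\<^sup>2"
proof -
  have unit: "(p / Y)\<^sup>2 + (q / Y)\<^sup>2 = 1"
    using Y pq(1) by (simp add: power_divide add_divide_distrib[symmetric])
  have small: "(p / Y)\<^sup>2 \<le> t\<^sup>2"
    using Y pq(4) by (simp add: power_divide divide_le_eq)
  have "q / Y - X / Y * (p / Y) = (q - X * p / Y) / Y"
    using Y by (simp add: field_simps)
  then have close: "q / Y - X / Y * (p / Y) \<le> w / Y"
    using Y Xw(3) by (simp add: divide_right_mono)
  have "s * (s - t) \<le> (w / Y)\<^sup>2 + t * (s - t) * (X / Y)\<^sup>2"
    by (rule overlap_angle_bound[OF st unit _ _ small _ _ close]) (use Y pq Xw in simp_all)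
  then have "s * (s - t) * Y\<^sup>2 \<le> ((w / Y)\<^sup>2 + t * (s - t) * (X / Y)\<^sup>2) * Y\<^sup>2"
    by (simp add: mult_right_mono)
  also have "\<dots> = w\<^sup>2 + t * (s - t) * X\<^sup>2"
    using Y by (simp add: power_divide distrib_right)
  finally show ?thesis .
qed

lemma sqnorm_proj_complement_lower_bound:
  fixes s t :: real
  assumes S: "is_subspace D a b S" and orth: "inner_sp D a b \<phi>1 \<phi>2 = 0"
    and overlap: "sqnorm D a b (proj D a b S \<phi>2) \<le> t\<^sup>2 * sqnorm D a b \<phi>2"
    and st: "s\<^sup>2 + t\<^sup>2 = 1" "s \<ge> 0" "t \<ge> 0" "t < s"
  shows "s * (s - t) * sqnorm D a b \<phi>2
    \<le> sqnorm D a b ((\<phi>1 + \<phi>2) - proj D a b S (\<phi>1 + \<phi>2)) + t * (s - t) * sqnorm D a b \<phi>1"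
proof (cases "sqnorm D a b \<phi>2 = 0")
  case True
  then show ?thesis using st by (simp add: sqnorm_nonneg)
next
  case False
  then have pos: "sqnorm D a b \<phi>2 > 0" using sqnorm_nonneg[of D a b \<phi>2] by simp
  let ?P = "proj D a b S"
  have "s * (s - t) * (sqrt (sqnorm D a b \<phi>2))\<^sup>2
      \<le> (sqrt (sqnorm D a b ((\<phi>1 + \<phi>2) - ?P (\<phi>1 + \<phi>2))))\<^sup>2 + t * (s - t) * (sqrt (sqnorm D a b \<phi>1))\<^sup>2"
  proof (rule overlap_angle_bound_scaled[OF st])
    show "(sqrt (sqnorm D a b (?P \<phi>2)))\<^sup>2 + (sqrt (sqnorm D a b (\<phi>2 - ?P \<phi>2)))\<^sup>2
        = (sqrt (sqnorm D a b \<phi>2))\<^sup>2"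
      using sqnorm_proj_pythagoras[OF S, of \<phi>2] by (simp add: sqnorm_nonneg)
    show "(sqrt (sqnorm D a b (?P \<phi>2)))\<^sup>2 \<le> t\<^sup>2 * (sqrt (sqnorm D a b \<phi>2))\<^sup>2"
      using overlap by (simp add: sqnorm_nonneg)
  qed (use pos norm_proj_complement_add_ge[OF S orth pos] in \<open>simp_all add: sqnorm_nonneg\<close>)
  then show ?thesis by (simp add: sqnorm_nonneg)
qed

section \<open>The induction on the chain length\<close>

lemma energy_split_at_ground_state:
  assumes pos: "positive_int D hm" and "a \<le> c" "c \<le> k" "k \<le> e" "e \<le> b" and \<psi>: "\<psi> \<in> vecs D a b"
  defines "\<psi>1 \<equiv> \<psi> - Gp D hm a b c k \<psi>"
  shows "Re (inner_sp D a b \<psi> (Ham D hm a b c e \<psi>))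
    = Re (inner_sp D a b \<psi>1 (Ham D hm a b c k \<psi>1)) + Re (inner_sp D a b \<psi> (Ham D hm a b k e \<psi>))"
proof -
  let ?\<psi>2 = "Gp D hm a b c k \<psi>"
  have H2: "Ham D hm a b c k ?\<psi>2 = 0"
    using Gp_in_gs by (simp add: mem_gs_iff)
  have \<psi>1: "\<psi>1 \<in> vecs D a b" unfolding \<psi>1_def by (rule vecs_diff[OF \<psi> Gp_in_vecs])
  have "inner_sp D a b ?\<psi>2 (Ham D hm a b c k \<psi>1) = inner_sp D a b (Ham D hm a b c k ?\<psi>2) \<psi>1"
    by (rule Ham_hermitian[OF pos _ _ Gp_in_vecs \<psi>1]) (use assms in simp_all)
  then have "inner_sp D a b \<psi> (Ham D hm a b c k \<psi>) = inner_sp D a b \<psi>1 (Ham D hm a b c k \<psi>1)"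
    using H2 Ham_add[of D hm a b c k \<psi>1 ?\<psi>2] inner_sp_add_left[of D a b \<psi>1 ?\<psi>2]
    unfolding \<psi>1_def by simp
  then show ?thesis
    using Ham_split[of c k e D hm a b \<psi>] assms by (simp add: inner_sp_add_right)
qed

text \<open>In the application \<open>s = \<surd>(1 - \<epsilon>)\<close> and \<open>t = \<surd>\<epsilon>\<close>. The bounds are proved in \<open>H_[1,b]\<close> for
  all \<open>b \<ge> N\<close>, so that the induction hypothesis for the chain \<open>[1,N-n]\<close> applies inside \<open>H_[1,N]\<close>.\<close>

locale chain_bound =
  fixes D :: nat and hm :: "nat \<Rightarrow> nat \<Rightarrow> nat \<Rightarrow> nat \<Rightarrow> complex" and m n :: int and \<gamma> s t :: real
  assumes pos: "positive_int D hm" and m: "1 \<le> m" "m \<le> n"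
    and \<gamma>: "\<gamma> \<ge> 0" "\<And>k. 2 \<le> k \<Longrightarrow> k \<le> m + n \<Longrightarrow> \<gamma> \<le> gap D hm 1 k"
    and st: "s\<^sup>2 + t\<^sup>2 = 1" "t \<ge> 0" "t < s"
    and eps_le: "\<And>m'. m \<le> m' \<Longrightarrow> eps D hm m' n \<le> t\<^sup>2"
begin

lemma s_nonneg: "s \<ge> 0"
  using st by simp

lemma weights_le_one: "(s - t)\<^sup>2 \<le> 1" "s * (s - t) \<le> 1"
proof -
  have "(s - t)\<^sup>2 = 1 - 2 * s * t" using st(1) by (simp add: power2_eq_square algebra_simps)
  then show "(s - t)\<^sup>2 \<le> 1" using s_nonneg st by simp
  have "s * (s - t) \<le> s\<^sup>2" using s_nonneg st by (simp add: power2_eq_square algebra_simps)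
  then show "s * (s - t) \<le> 1" using st(1) by (smt (verit) zero_le_power2)
qed

lemma short_chain_energy:
  assumes N: "1 \<le> N" "N \<le> m + n" "N \<le> b" and \<psi>: "\<psi> \<in> vecs D 1 b" "Gp D hm 1 b 1 N \<psi> = 0"
  shows "\<gamma> * sqnorm D 1 b \<psi> \<le> Re (inner_sp D 1 b \<psi> (Ham D hm 1 b 1 N \<psi>))"
proof (cases "N = 1")
  case True
  have "\<psi> \<in> gs D hm 1 b 1 N" using \<psi>(1) True Ham_empty by (simp add: mem_gs_iff)
  then have "\<psi> = 0" using \<psi>(2) unfolding Gp_def by (simp add: proj_eq_self[OF is_subspace_gs])
  then show ?thesis by (simp add: sqnorm_def Ham_zero)
next
  case False
  have "has_gap D hm (gap D hm 1 N) 1 b 1 N"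
    by (rule has_gap_slice[OF _ N(3) has_gap_gap[OF pos]]) simp
  moreover have "\<gamma> \<le> gap D hm 1 N"
    using N False by (intro \<gamma>(2)) simp_all
  ultimately have "has_gap D hm \<gamma> 1 b 1 N"
    by (rule has_gap_mono)
  then have "\<gamma> * sqnorm D 1 b (\<psi> - Gp D hm 1 b 1 N \<psi>) \<le> Re (inner_sp D 1 b \<psi> (Ham D hm 1 b 1 N \<psi>))"
    using \<psi>(1) unfolding has_gap_def by blast
  then show ?thesis using \<psi>(2) by simp
qed

lemma short_chain_bound:
  assumes N: "1 \<le> N" "N \<le> m + n" "N \<le> b" and \<psi>: "\<psi> \<in> vecs D 1 b" "Gp D hm 1 b 1 N \<psi> = 0"
  defines "\<psi>2 \<equiv> Gp D hm 1 b 1 (N - n) \<psi>"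
  shows "\<gamma> * ((s - t)\<^sup>2 * sqnorm D 1 b (\<psi> - \<psi>2) + s * (s - t) * sqnorm D 1 b \<psi>2)
    \<le> Re (inner_sp D 1 b \<psi> (Ham D hm 1 b 1 N \<psi>))"
proof -
  have "(s - t)\<^sup>2 * sqnorm D 1 b (\<psi> - \<psi>2) + s * (s - t) * sqnorm D 1 b \<psi>2
      \<le> sqnorm D 1 b (\<psi> - \<psi>2) + sqnorm D 1 b \<psi>2"
    using weights_le_one s_nonneg st
    by (intro add_mono mult_left_le_one_le sqnorm_nonneg) simp_all
  also have "\<dots> = sqnorm D 1 b \<psi>"
    using sqnorm_proj_pythagoras[OF is_subspace_gs[of D 1 b hm 1 "N - n"], of \<psi>]
    unfolding \<psi>2_def Gp_def by simp
  finally show ?thesis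
    using short_chain_energy[OF assms(1-5)] \<gamma>(1) by (meson mult_left_mono order_trans)
qed

lemma right_block_gap:
  assumes N: "m + n < N" "N \<le> b" and \<psi>: "\<psi> \<in> vecs D 1 b"
  shows "\<gamma> * sqnorm D 1 b (\<psi> - Gp D hm 1 b (N - n) N \<psi>) \<le> Re (inner_sp D 1 b \<psi> (Ham D hm 1 b (N - n) N \<psi>))"
proof -
  have "has_gap D hm (gap D hm 1 (n + 1)) (N - n) N (N - n) N"
    by (rule has_gap_shift[OF has_gap_gap[OF pos], where t = "N - n - 1"]) simp_all
  then have "has_gap D hm (gap D hm 1 (n + 1)) 1 b (N - n) N"
    by (rule has_gap_slice[rotated 2]) (use N m in simp_all)
  moreover have "\<gamma> \<le> gap D hm 1 (n + 1)"
    using m by (intro \<gamma>(2)) simp_all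
  ultimately have "has_gap D hm \<gamma> 1 b (N - n) N"
    by (rule has_gap_mono)
  then show ?thesis using \<psi> unfolding has_gap_def by simp
qed

lemma ground_part_overlap:
  assumes N: "m + n < N" "N \<le> b" and \<psi>: "Gp D hm 1 b 1 N \<psi> = 0"
  defines "\<psi>2 \<equiv> Gp D hm 1 b 1 (N - n) \<psi>"
  shows "sqnorm D 1 b (Gp D hm 1 b (N - n) N \<psi>2) \<le> t\<^sup>2 * sqnorm D 1 b \<psi>2"
proof -
  have "Gp D hm 1 b 1 N \<psi>2 = Gp D hm 1 b 1 N \<psi>"
    unfolding \<psi>2_def Gp_def
    by (rule proj_proj_subset[OF is_subspace_gs is_subspace_gs gs_subset_gs[OF pos]]) (use N m in simp_all)
  then have "sqnorm D 1 b (Gp D hm 1 b (N - n) N \<psi>2) \<le> eps D hm (N - n - 1) n * sqnorm D 1 b \<psi>2"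
    using N m \<psi> unfolding \<psi>2_def by (intro sqnorm_Gp_le_eps_slice Gp_in_gs) simp_all
  also have "\<dots> \<le> t\<^sup>2 * sqnorm D 1 b \<psi>2"
    using eps_le N by (intro mult_right_mono sqnorm_nonneg) simp
  finally show ?thesis .
qed

lemma chain_step_geometry:
  assumes N: "m + n < N" "N \<le> b" and \<psi>: "\<psi> \<in> vecs D 1 b" "Gp D hm 1 b 1 N \<psi> = 0"
  defines "\<psi>2 \<equiv> Gp D hm 1 b 1 (N - n) \<psi>" and "\<psi>1 \<equiv> \<psi> - Gp D hm 1 b 1 (N - n) \<psi>"
    and "E' \<equiv> Gp D hm 1 b 1 (N - n - n)" and "F \<equiv> Gp D hm 1 b (N - n) N"
  shows "(s - t)\<^sup>2 * sqnorm D 1 b \<psi>1 + s * (s - t) * sqnorm D 1 b \<psi>2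
    \<le> (s - t)\<^sup>2 * sqnorm D 1 b (\<psi>1 - E' \<psi>1) + s * (s - t) * sqnorm D 1 b (E' \<psi>1)
      + sqnorm D 1 b (\<psi> - F \<psi>)"
proof -
  let ?\<phi>1 = "E' \<psi>1"
  have E'_sub: "is_subspace D 1 b (gs D hm 1 b 1 (N - n - n))" by (rule is_subspace_gs)
  have \<psi>2_gs: "\<psi>2 \<in> gs D hm 1 b 1 (N - n)" unfolding \<psi>2_def by (rule Gp_in_gs)
  have "gs D hm 1 b 1 (N - n) \<subseteq> gs D hm 1 b 1 (N - n - n)"
    using N m by (intro gs_subset_gs[OF pos]) simp_all
  then have E'\<psi>2: "E' \<psi>2 = \<psi>2"
    using \<psi>2_gs unfolding E'_def Gp_def by (intro proj_eq_self[OF E'_sub]) blast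
  have "E' \<psi> = E' (\<psi>1 + \<psi>2)"
    unfolding \<psi>1_def \<psi>2_def by simp
  also have "\<dots> = ?\<phi>1 + \<psi>2"
    using proj_add[OF E'_sub, of \<psi>1 \<psi>2] E'\<psi>2 unfolding E'_def Gp_def by simp
  finally have E'\<psi>: "E' \<psi> = ?\<phi>1 + \<psi>2" .
  have commuting: "(?\<phi>1 + \<psi>2) - F (?\<phi>1 + \<psi>2) = E' (\<psi> - F \<psi>)"
    using Gp_commute[OF pos _ _ N(2) _ \<psi>(1), of 1 "N - n - n" "N - n"] N m
      proj_diff[OF E'_sub, of \<psi> "F \<psi>"] E'\<psi>
    unfolding E'_def F_def Gp_def by simp
  have "inner_sp D 1 b ?\<phi>1 \<psi>2 = inner_sp D 1 b \<psi>1 \<psi>2"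
    using proj_self_adjoint[OF E'_sub, of \<psi>1 \<psi>2] E'\<psi>2 unfolding E'_def Gp_def by simp
  also have "\<dots> = 0"
    using inner_sp_eq_0_commute[OF proj_orth_self[OF is_subspace_gs]]
    unfolding \<psi>1_def \<psi>2_def Gp_def by blast
  finally have orth: "inner_sp D 1 b ?\<phi>1 \<psi>2 = 0" .
  have "s * (s - t) * sqnorm D 1 b \<psi>2
      \<le> sqnorm D 1 b ((?\<phi>1 + \<psi>2) - F (?\<phi>1 + \<psi>2)) + t * (s - t) * sqnorm D 1 b ?\<phi>1"
    using sqnorm_proj_complement_lower_bound[OF is_subspace_gs orth _ st(1) s_nonneg st(2,3)]
      ground_part_overlap[OF N \<psi>(2)]
    unfolding F_def Gp_def \<psi>2_def by blast
  moreover have "sqnorm D 1 b ((?\<phi>1 + \<psi>2) - F (?\<phi>1 + \<psi>2)) \<le> sqnorm D 1 b (\<psi> - F \<psi>)"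
    unfolding commuting unfolding E'_def Gp_def by (rule sqnorm_proj_le[OF E'_sub])
  moreover have "sqnorm D 1 b \<psi>1 = sqnorm D 1 b (\<psi>1 - ?\<phi>1) + sqnorm D 1 b ?\<phi>1"
    using sqnorm_proj_pythagoras[OF E'_sub, of \<psi>1] unfolding E'_def Gp_def by simp
  ultimately show ?thesis
    by (simp add: power2_eq_square algebra_simps)
qed

lemma chain_step:
  assumes N: "m + n < N" "N \<le> b" and \<psi>: "\<psi> \<in> vecs D 1 b" "Gp D hm 1 b 1 N \<psi> = 0"
  defines "\<psi>2 \<equiv> Gp D hm 1 b 1 (N - n) \<psi>" and "\<psi>1 \<equiv> \<psi> - Gp D hm 1 b 1 (N - n) \<psi>"
    and "E' \<equiv> Gp D hm 1 b 1 (N - n - n)"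
  assumes IH: "\<gamma> * ((s - t)\<^sup>2 * sqnorm D 1 b (\<psi>1 - E' \<psi>1) + s * (s - t) * sqnorm D 1 b (E' \<psi>1))
      \<le> Re (inner_sp D 1 b \<psi>1 (Ham D hm 1 b 1 (N - n) \<psi>1))"
  shows "\<gamma> * ((s - t)\<^sup>2 * sqnorm D 1 b \<psi>1 + s * (s - t) * sqnorm D 1 b \<psi>2)
    \<le> Re (inner_sp D 1 b \<psi> (Ham D hm 1 b 1 N \<psi>))"
proof -
  have "\<gamma> * ((s - t)\<^sup>2 * sqnorm D 1 b \<psi>1 + s * (s - t) * sqnorm D 1 b \<psi>2)
      \<le> \<gamma> * ((s - t)\<^sup>2 * sqnorm D 1 b (\<psi>1 - E' \<psi>1) + s * (s - t) * sqnorm D 1 b (E' \<psi>1))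
        + \<gamma> * sqnorm D 1 b (\<psi> - Gp D hm 1 b (N - n) N \<psi>)"
    using mult_left_mono[OF chain_step_geometry[OF N \<psi>] \<gamma>(1)]
    unfolding \<psi>1_def \<psi>2_def E'_def by (simp add: distrib_left)
  also have "\<dots> \<le> Re (inner_sp D 1 b \<psi>1 (Ham D hm 1 b 1 (N - n) \<psi>1))
      + Re (inner_sp D 1 b \<psi> (Ham D hm 1 b (N - n) N \<psi>))"
    using IH right_block_gap[OF N \<psi>(1)] by (rule add_mono)
  also have "\<dots> = Re (inner_sp D 1 b \<psi> (Ham D hm 1 b 1 N \<psi>))"
    unfolding \<psi>1_def \<psi>2_def using N m
    by (intro energy_split_at_ground_state[OF pos _ _ _ _ \<psi>(1), symmetric]) simp_all
  finally show ?thesis .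
qed

lemma chain_lower_bound:
  assumes "1 \<le> N" "N \<le> b" "\<psi> \<in> vecs D 1 b" "Gp D hm 1 b 1 N \<psi> = 0"
  defines "\<psi>2 \<equiv> Gp D hm 1 b 1 (N - n) \<psi>"
  shows "\<gamma> * ((s - t)\<^sup>2 * sqnorm D 1 b (\<psi> - \<psi>2) + s * (s - t) * sqnorm D 1 b \<psi>2)
    \<le> Re (inner_sp D 1 b \<psi> (Ham D hm 1 b 1 N \<psi>))"
  using assms(1-4) unfolding \<psi>2_def
proof (induction "nat N" arbitrary: N \<psi> rule: less_induct)
  case less
  show ?case
  proof (cases "N \<le> m + n")
    case True
    then show ?thesis using short_chain_bound less.prems by blast
  next
    case False
    let ?\<psi>1 = "\<psi> - Gp D hm 1 b 1 (N - n) \<psi>"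
    have "?\<psi>1 \<in> vecs D 1 b" by (rule vecs_diff[OF less.prems(3) Gp_in_vecs])
    moreover have "Gp D hm 1 b 1 (N - n) ?\<psi>1 = 0"
      unfolding Gp_def proj_diff[OF is_subspace_gs] proj_eq_self[OF is_subspace_gs proj_in[OF is_subspace_gs]]
      by simp
    ultimately have "\<gamma> * ((s - t)\<^sup>2 * sqnorm D 1 b (?\<psi>1 - Gp D hm 1 b 1 (N - n - n) ?\<psi>1)
        + s * (s - t) * sqnorm D 1 b (Gp D hm 1 b 1 (N - n - n) ?\<psi>1))
      \<le> Re (inner_sp D 1 b ?\<psi>1 (Ham D hm 1 b 1 (N - n) ?\<psi>1))"
      using False less.prems m by (intro less.hyps) simp_all
    then show ?thesis
      using chain_step[OF _ less.prems(2-4)] False by simp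
  qed
qed

end

lemma chain_bound_sqrt_eps:
  assumes "positive_int D hm" "1 \<le> m" "m \<le> n" "eps_mn D hm m n < 1/2" "gapN D hm (m + n) \<ge> 0"
  shows "chain_bound D hm m n (gapN D hm (m + n)) (sqrt (1 - eps_mn D hm m n)) (sqrt (eps_mn D hm m n))"
proof
  have \<epsilon>: "0 \<le> eps_mn D hm m n"
    using eps_nonneg[of D hm m n] eps_le_eps_mn[of m m D hm n] by simp
  then show "(sqrt (1 - eps_mn D hm m n))\<^sup>2 + (sqrt (eps_mn D hm m n))\<^sup>2 = 1"
    and "0 \<le> sqrt (eps_mn D hm m n)" and "sqrt (eps_mn D hm m n) < sqrt (1 - eps_mn D hm m n)"
    using assms(4) by simp_all
  show "eps D hm m' n \<le> (sqrt (eps_mn D hm m n))\<^sup>2" if "m \<le> m'" for m'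
    using \<epsilon> eps_le_eps_mn[OF that] by simp
  show "gapN D hm (m + n) \<le> gap D hm 1 k" if "2 \<le> k" "k \<le> m + n" for k
    unfolding gapN_def using that by (intro Min_le) auto
qed (use assms in simp_all)

lemma gapN_lower_bound:
  assumes pos: "positive_int D hm" and m: "1 \<le> m" "m \<le> n" and eps: "eps_mn D hm m n < 1/2"
    and \<psi>: "1 \<le> N" "\<psi> \<in> vecs D 1 N" "Gp D hm 1 N 1 N \<psi> = 0"
  defines "\<epsilon> \<equiv> eps_mn D hm m n" and "\<psi>2 \<equiv> Gp D hm 1 N 1 (N - n) \<psi>"
  shows "gapN D hm (m + n) * (alpha \<epsilon> * sqnorm D 1 N (\<psi> - \<psi>2) + beta \<epsilon> * sqnorm D 1 N \<psi>2)
    \<le> Re (inner_sp D 1 N \<psi> (Ham D hm 1 N 1 N \<psi>))"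
proof (cases "gapN D hm (m + n) \<ge> 0")
  case True
  interpret chain_bound D hm m n "gapN D hm (m + n)" "sqrt (1 - \<epsilon>)" "sqrt \<epsilon>"
    unfolding \<epsilon>_def using chain_bound_sqrt_eps[OF pos m eps True] .
  show ?thesis
    unfolding alpha_def beta_def \<psi>2_def using \<psi> by (intro chain_lower_bound) simp_all
next
  case False
  \<comment> \<open>\<open>gap\<close> is a supremum and may take a junk value; then the bound is trivial\<close>
  have "0 \<le> \<epsilon>" "\<epsilon> < 1/2"
    using eps_nonneg[of D hm m n] eps_le_eps_mn[of m m D hm n] eps unfolding \<epsilon>_def by simp_all
  then have "0 \<le> alpha \<epsilon> * sqnorm D 1 N (\<psi> - \<psi>2) + beta \<epsilon> * sqnorm D 1 N \<psi>2"
    unfolding alpha_def beta_def by (intro add_nonneg_nonneg mult_nonneg_nonneg sqnorm_nonneg) simp_all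
  then show ?thesis
    using False inner_sp_Ham_nonneg[OF pos, of 1 1 N N \<psi>] by (smt (verit) mult_nonpos_nonneg)
qed

theorem theorem2p1:
  fixes D :: nat and hm :: "nat \<Rightarrow> nat \<Rightarrow> nat \<Rightarrow> nat \<Rightarrow> complex"
    and m n N :: int and \<psi> :: vec
  assumes "D \<ge> 2"
    and "positive_int D hm"
    and "frustration_free D hm"
    and "1 \<le> m" and "m \<le> n"
    and "eps_mn D hm m n < 1/2"
    and "N \<ge> 2"
    and "\<psi> \<in> vecs D 1 N"
    and "\<forall>u\<in>gs D hm 1 N 1 N. inner_sp D 1 N u \<psi> = 0"
  shows "let \<psi>2 = Gp D hm 1 N 1 (N - n) \<psi>;
             \<psi>1 = (\<lambda>\<sigma>. \<psi> \<sigma> - \<psi>2 \<sigma>);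
             \<epsilon> = eps_mn D hm m n
         in Re (inner_sp D 1 N \<psi> (Ham D hm 1 N 1 N \<psi>))
            \<ge> gapN D hm (m + n) * (alpha \<epsilon> * (norm_sp D 1 N \<psi>1)^2 + beta \<epsilon> * (norm_sp D 1 N \<psi>2)^2)"
proof -
  have "Gp D hm 1 N 1 N \<psi> = 0"
    using assms(9) unfolding Gp_def proj_eq_0_iff[OF is_subspace_gs] .
  moreover have "(\<lambda>\<sigma>. \<psi> \<sigma> - Gp D hm 1 N 1 (N - n) \<psi> \<sigma>) = \<psi> - Gp D hm 1 N 1 (N - n) \<psi>"
    by (rule ext) simp
  ultimately show ?thesis
    using gapN_lower_bound[OF assms(2,4-6) _ assms(8)] assms(7)
    unfolding Let_def norm_sp_power2 by simp
qed

end
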